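(* Let $k\ge 2$, $x_0>0$, $s>0$, and let $N\ge 2$, $M>N$ be integers, $G_M=M-N+1$. Let $\Phi_1$ be a homogeneous Poisson point process in $\mathbb{R}^2$ of intensity $\lambda_1>0$, let $P_1,P_k,B_k,\eta,a_{n,k}>0$, $\alpha_1,\alpha_k>2$, $\delta_1=2/\alpha_1$, $\tilde P_{1k}=P_1/P_k$ and $$\omega_{1,k}(x_0)=\Big(\frac{\tilde P_{1k}G_M}{a_{n,k}B_kN}\Big)^{\delta_1/2}x_0^{\alpha_k/\alpha_1}.$$ Let $$I_{M,k}=\sum_{y\in\Phi_1,\ |y|>\omega_{1,k}(x_0)}\frac{P_1}{N}\,g_y\,\eta\,|y|^{-\alpha_1},$$ where the $g_y$ are i.i.d. Gamma$(N,1)$ random variables independent of $\Phi_1$. Then $$\mathbb{E}\big[e^{-sI_{M,k}}\big]=\exp\left[-\lambda_1\pi\delta_1\sum_{p=1}^N\binom{N}{p}\Big(s\frac{P_1}{N}\eta\Big)^p\Big(-s\frac{P_1}{N}\eta\Big)^{\delta_1-p}B\Big(-s\frac{P_1}{N}\eta\big[\omega_{1,k}(x_0)\big]^{-\alpha_1};\,p-\delta_1,\,1-N\Big)\right].$$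
   Context: $B(z;a,b)=\int_0^z t^{a-1}(1-t)^{b-1}\,dt$ is the incomplete Beta function, the integral taken along the real segment from $0$ to $z$; non-integer powers of negative reals use the principal branch, $(-y)^c=y^ce^{i\pi c}$ for $y>0$ (with this convention the exponent is real). This is the Laplace transform of the macro-cell interference seen by a typical user at the origin associated with a tier-$k$ small-cell base station at distance $x_0$: macro base stations have $M$ antennas, serve $N$ users by zero-forcing with per-stream power $P_1/N$, and those closer than $\omega_{1,k}(x_0)$ are excluded by the association rule; $a_{n,k}$ is the NOMA power-sharing coefficient of the near user in tier $k$ and $B_k$ its bias factor. *)

theory Defs
  imports "HOL-Probability.Probability"
begin

text \<open>Number of points of the (enumerated) point process X lying in A, at outcome w.
  Points are counted with multiplicity of their index.\<close>
definition pp_count :: "(nat \<Rightarrow> 'w \<Rightarrow> real^2) \<Rightarrow> (real^2) set \<Rightarrow> 'w \<Rightarrow> nat" where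
  "pp_count X A w = card {n. X n w \<in> A}"

definition homogeneous_PPP :: "'w measure \<Rightarrow> real \<Rightarrow> (nat \<Rightarrow> 'w \<Rightarrow> real^2) \<Rightarrow> bool" where
  "homogeneous_PPP M lam X \<longleftrightarrow>
     (\<forall>n. X n \<in> borel_measurable M) \<and>
     (\<forall>A \<in> sets borel. bounded A \<longrightarrow>
        (AE w in M. finite {n. X n w \<in> A}) \<and>
        (\<forall>k::nat. measure M {w \<in> space M. pp_count X A w = k}
            = (lam * measure lborel A) ^ k / fact k * exp (- lam * measure lborel A))) \<and>
     (\<forall>(I::nat set) (A::nat \<Rightarrow> (real^2) set). finite I \<longrightarrow>
        (\<forall>i\<in>I. A i \<in> sets borel \<and> bounded (A i)) \<longrightarrow>
        disjoint_family_on A I \<longrightarrow>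
        prob_space.indep_vars M (\<lambda>_. count_space UNIV) (\<lambda>i. pp_count X (A i)) I)"

text \<open>Incomplete Beta function B(z;a,b) = integral of t^(a-1) (1-t)^(b-1) along the real
  segment from 0 to z, written via the parametrisation t = z*u, u in [0,1].  Complex powers
  use the principal branch (Isabelle's complex powr: z powr c = exp (c * Ln z)), so that
  (-y) powr c = y powr c * exp(i pi c) for y > 0.\<close>
definition inc_beta :: "complex \<Rightarrow> complex \<Rightarrow> complex \<Rightarrow> complex" where
  "inc_beta z a b = integral {0..1::real}
     (\<lambda>u. z * (z * complex_of_real u) powr (a - 1) * (1 - z * complex_of_real u) powr (b - 1))"

end

theory Submission
  imports Defs
begin

text \<open>Conditioning on the points, a Gamma(N,1) mark at distance r contributes the factor
  1/(1 + c r^(-alpha))^N, so the Laplace transform of the interference is the probability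
  generating functional E[prod phi(x)] of the Poisson process. Splitting the region outside
  radius omega into annuli of equal area h, whose point counts are independent Poisson
  variables, squeezes this functional between exp(-lambda (G(omega^2) +- pi h)), where G(v) is
  the integral of 1 - phi over |y|^2 > v; letting h tend to 0 gives exp(-lambda G(omega^2)).
  After the substitution t = c |y|^(-alpha) and a binomial expansion of 1 - (1+t)^(-N), G is a
  sum of real incomplete Beta integrals, which the rotation of the integration segment onto the
  negative axis turns into the complex incomplete Beta values of the statement: the phases of
  the principal powers cancel. Letting s tend to 0 in the same formula shows that the
  interference series converges almost surely.\<close>

section \<open>Erlang marks, Poisson counts and random series\<close>

lemma nn_integral_erlang_exp:
  fixes t :: real and k :: nat
  assumes t: "t \<ge> 0"
  shows "(\<integral>\<^sup>+x. ennreal (erlang_density k 1 x) * ennreal (exp (- t * x)) \<partial>lborel)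
       = ennreal (1 / (1 + t) ^ Suc k)"
proof -
  have l: "0 < 1 + t" using t by simp
  have eq: "erlang_density k 1 x * exp (- t * x) = erlang_density k (1 + t) x * x ^ 0 * (1 / (1 + t) ^ Suc k)" for x
  proof (cases "x < 0")
    case True then show ?thesis by (simp add: erlang_density_def)
  next
    case False
    have e: "exp (- x) * exp (- t * x) = exp (- (1 + t) * x)" by (simp add: exp_add[symmetric] algebra_simps)
    have h1: "(1 + t) ^ Suc k * (1 / (1 + t) ^ Suc k) = 1" using l by simp
    have "erlang_density k (1 + t) x * x ^ 0 * (1 / (1 + t) ^ Suc k)
        = ((1 + t) ^ Suc k * (1 / (1 + t) ^ Suc k)) * (x ^ k * exp (- (1 + t) * x) / fact k)"
      using False by (simp add: erlang_density_def divide_inverse mult_ac del: power_Suc)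
    also have "\<dots> = x ^ k * exp (- (1 + t) * x) / fact k" by (simp only: h1 mult_1_left)
    also have "\<dots> = erlang_density k 1 x * exp (- t * x)"
      using False e[symmetric] by (simp add: erlang_density_def divide_inverse mult_ac)
    finally show ?thesis by simp
  qed
  have "(\<integral>\<^sup>+x. ennreal (erlang_density k 1 x) * ennreal (exp (- t * x)) \<partial>lborel)
     = (\<integral>\<^sup>+x. ennreal (erlang_density k (1 + t) x * x ^ 0) * ennreal (1 / (1 + t) ^ Suc k) \<partial>lborel)"
  proof (intro nn_integral_cong)
    fix x
    show "ennreal (erlang_density k 1 x) * ennreal (exp (- t * x))
        = ennreal (erlang_density k (1 + t) x * x ^ 0) * ennreal (1 / (1 + t) ^ Suc k)"
      using l eq[of x] by (simp add: ennreal_mult'[symmetric] del: ennreal_mult)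
  qed
  also have "\<dots> = (\<integral>\<^sup>+x. ennreal (erlang_density k (1 + t) x * x ^ 0) \<partial>lborel) * ennreal (1 / (1 + t) ^ Suc k)"
    by (rule nn_integral_multc) auto
  also have "\<dots> = ennreal (1 / (1 + t) ^ Suc k)"
    using nn_integral_erlang_ith_moment[OF l, where k=k and i=0] by simp
  finally show ?thesis .
qed

lemma (in prob_space) nn_integral_poisson_pgf:
  fixes Nc :: "'a \<Rightarrow> nat"
  assumes Nm: "Nc \<in> measurable M (count_space UNIV)"
    and dist: "\<forall>k::nat. measure M {w\<in>space M. Nc w = k} = \<mu> ^ k / fact k * exp (- \<mu>)"
    and c: "0 \<le> c" and mu: "0 \<le> \<mu>"
  shows "(\<integral>\<^sup>+w. ennreal (c ^ Nc w) \<partial>M) = ennreal (exp (- \<mu> * (1 - c)))"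
proof -
  define A where "A = (\<lambda>k. {w\<in>space M. Nc w = k})"
  have A: "A k \<in> sets M" for k
  proof -
    have "A k = Nc -` {k} \<inter> space M" by (auto simp: A_def)
    then show ?thesis using measurable_sets[OF Nm, of "{k}"] by simp
  qed
  have disj: "disjoint_family A" by (auto simp: disjoint_family_on_def A_def)
  have "(\<integral>\<^sup>+w. ennreal (c ^ Nc w) \<partial>M) = (\<integral>\<^sup>+w. (\<Sum>k. ennreal (c ^ k) * indicator (A k) w) \<partial>M)"
    by (intro nn_integral_cong, subst suminf_cmult_indicator[OF disj, where i="Nc w" for w])
       (auto simp: A_def)
  also have "\<dots> = (\<Sum>k. \<integral>\<^sup>+w. ennreal (c ^ k) * indicator (A k) w \<partial>M)"
    by (rule nn_integral_suminf) (use A in auto)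
  also have "\<dots> = (\<Sum>k. ennreal (c ^ k) * emeasure M (A k))"
    by (simp add: nn_integral_cmult_indicator A)
  also have "\<dots> = (\<Sum>k. ennreal ((c * \<mu>) ^ k / fact k * exp (- \<mu>)))"
    by (intro suminf_cong)
       (use dist c mu in \<open>simp add: emeasure_eq_measure A_def ennreal_mult'[symmetric] power_mult_distrib\<close>)
  also have "\<dots> = ennreal (exp (c * \<mu>) * exp (- \<mu>))"
  proof (rule suminf_ennreal_eq)
    show "0 \<le> (c * \<mu>) ^ k / fact k * exp (- \<mu>)" for k using c mu by simp
    show "(\<lambda>k. (c * \<mu>) ^ k / fact k * exp (- \<mu>)) sums (exp (c * \<mu>) * exp (- \<mu>))"
      using sums_mult2[OF exp_converges[of "c * \<mu>"], of "exp (- \<mu>)"]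
      by (simp add: scaleR_conv_of_real divide_inverse mult_ac)
  qed
  also have "exp (c * \<mu>) * exp (- \<mu>) = exp (- \<mu> * (1 - c))"
    by (simp add: exp_add[symmetric] algebra_simps)
  finally show ?thesis .
qed

lemma (in prob_space) nn_integral_prod_exp_indep_erlang:
  fixes g :: "nat \<Rightarrow> 'a \<Rightarrow> real" and b :: "nat \<Rightarrow> real"
  assumes gm: "\<forall>n. g n \<in> borel_measurable M"
    and gd: "\<forall>n. distributed M lborel (g n) (erlang_density k 1)"
    and gi: "indep_vars (\<lambda>_. borel) g UNIV" and b0: "\<forall>n. 0 \<le> b n"
  shows "(\<integral>\<^sup>+w. (\<Prod>n<K. ennreal (exp (- b n * g n w))) \<partial>M) = (\<Prod>n<K. ennreal (1 / (1 + b n) ^ Suc k))"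
proof -
  note gm[rule_format, measurable]
  have "(\<integral>\<^sup>+w. (\<Prod>n<K. ennreal (exp (- b n * g n w))) \<partial>M)
      = (\<Prod>n<K. \<integral>\<^sup>+w. ennreal (exp (- b n * g n w)) \<partial>M)"
  proof (rule indep_vars_nn_integral)
    have "indep_vars (\<lambda>_. borel) g {..<K}" using gi indep_vars_subset by blast
    then show "indep_vars (\<lambda>_. borel) (\<lambda>n w. ennreal (exp (- b n * g n w))) {..<K}"
      by (rule indep_vars_compose2) auto
  qed auto
  also have "\<dots> = (\<Prod>n<K. ennreal (1 / (1 + b n) ^ Suc k))"
  proof (intro prod.cong refl)
    fix n
    have "(\<integral>\<^sup>+w. ennreal (exp (- b n * g n w)) \<partial>M)
        = (\<integral>\<^sup>+y. ennreal (erlang_density k 1 y) * ennreal (exp (- b n * y)) \<partial>lborel)"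
      by (rule distributed_nn_integral[symmetric, OF gd[rule_format]]) auto
    also have "\<dots> = ennreal (1 / (1 + b n) ^ Suc k)"
      by (rule nn_integral_erlang_exp) (use b0 in auto)
    finally show "(\<integral>\<^sup>+w. ennreal (exp (- b n * g n w)) \<partial>M) = ennreal (1 / (1 + b n) ^ Suc k)" .
  qed
  finally show ?thesis .
qed

lemma (in prob_space) nn_integral_prod_exp_erlang_marks:
  fixes X :: "nat \<Rightarrow> 'a \<Rightarrow> real^2" and g :: "nat \<Rightarrow> 'a \<Rightarrow> real" and \<beta> :: "real^2 \<Rightarrow> real"
  assumes Xm: "\<forall>n. X n \<in> borel_measurable M" and gm: "\<forall>n. g n \<in> borel_measurable M"
    and gd: "\<forall>n. distributed M lborel (g n) (erlang_density k 1)"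
    and gi: "indep_vars (\<lambda>_. borel) g UNIV"
    and gX: "distr M (Pi\<^sub>M UNIV (\<lambda>_. borel) \<Otimes>\<^sub>M Pi\<^sub>M UNIV (\<lambda>_. borel))
                        (\<lambda>w. ((\<lambda>n. X n w), (\<lambda>n. g n w)))
                    = distr M (Pi\<^sub>M UNIV (\<lambda>_. borel)) (\<lambda>w n. X n w)
                      \<Otimes>\<^sub>M distr M (Pi\<^sub>M UNIV (\<lambda>_. borel)) (\<lambda>w n. g n w)"
    and bm: "\<beta> \<in> borel_measurable borel" and b0: "\<forall>y. 0 \<le> \<beta> y"
  shows "(\<integral>\<^sup>+w. ennreal (\<Prod>n<K. exp (- \<beta> (X n w) * g n w)) \<partial>M)
       = (\<integral>\<^sup>+w. ennreal (\<Prod>n<K. 1 / (1 + \<beta> (X n w)) ^ Suc k) \<partial>M)"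
proof -
  note Xm[rule_format, measurable] gm[rule_format, measurable] bm[measurable]
  define PX where "PX = distr M (Pi\<^sub>M UNIV (\<lambda>_. borel)) (\<lambda>w n. X n w)"
  define Pg where "Pg = distr M (Pi\<^sub>M UNIV (\<lambda>_. borel)) (\<lambda>w n. g n w)"
  have mX[measurable]: "(\<lambda>w n. X n w) \<in> measurable M (Pi\<^sub>M UNIV (\<lambda>_. borel))"
    by (rule measurable_PiM_single') (auto simp: Xm)
  have mg[measurable]: "(\<lambda>w n. g n w) \<in> measurable M (Pi\<^sub>M UNIV (\<lambda>_. borel :: real measure))"
    by (rule measurable_PiM_single') (auto simp: gm)
  interpret PX: prob_space PX unfolding PX_def by (rule prob_space_distr) (rule mX)
  interpret Pg: prob_space Pg unfolding Pg_def by (rule prob_space_distr) (rule mg)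
  define F where "F = (\<lambda>z::(nat\<Rightarrow>real^2)\<times>(nat\<Rightarrow>real). ennreal (\<Prod>n<K. exp (- \<beta> (fst z n) * snd z n)))"
  have Fm0: "F \<in> borel_measurable (Pi\<^sub>M UNIV (\<lambda>_. borel) \<Otimes>\<^sub>M Pi\<^sub>M UNIV (\<lambda>_. borel))"
    unfolding F_def by measurable
  have sPX: "sets PX = sets (Pi\<^sub>M UNIV (\<lambda>_. borel))" by (simp add: PX_def)
  have sPg: "sets Pg = sets (Pi\<^sub>M UNIV (\<lambda>_. borel))" by (simp add: Pg_def)
  have Fm: "F \<in> borel_measurable (PX \<Otimes>\<^sub>M Pg)"
    using Fm0 by (subst measurable_cong_sets[OF sets_pair_measure_cong[OF sPX sPg] refl])
  have inner: "(\<integral>\<^sup>+h. F (x, h) \<partial>Pg) = ennreal (\<Prod>n<K. 1 / (1 + \<beta> (x n)) ^ Suc k)" for x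
  proof -
    have "(\<integral>\<^sup>+h. F (x, h) \<partial>Pg) = (\<integral>\<^sup>+w. (\<Prod>n<K. ennreal (exp (- \<beta> (x n) * g n w))) \<partial>M)"
      unfolding Pg_def F_def by (subst nn_integral_distr) (auto simp: prod_ennreal)
    also have "\<dots> = ennreal (\<Prod>n<K. 1 / (1 + \<beta> (x n)) ^ Suc k)"
      using b0 by (subst nn_integral_prod_exp_indep_erlang[OF gm gd gi]) (auto simp: prod_ennreal)
    finally show ?thesis .
  qed
  have "(\<integral>\<^sup>+w. ennreal (\<Prod>n<K. exp (- \<beta> (X n w) * g n w)) \<partial>M)
      = (\<integral>\<^sup>+z. F z \<partial>distr M (Pi\<^sub>M UNIV (\<lambda>_. borel) \<Otimes>\<^sub>M Pi\<^sub>M UNIV (\<lambda>_. borel))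
                        (\<lambda>w. ((\<lambda>n. X n w), (\<lambda>n. g n w))))"
    by (subst nn_integral_distr) (auto simp: Fm0 F_def)
  also have "\<dots> = (\<integral>\<^sup>+z. F z \<partial>(PX \<Otimes>\<^sub>M Pg))"
    using gX by (simp add: PX_def Pg_def)
  also have "\<dots> = (\<integral>\<^sup>+x. \<integral>\<^sup>+h. F (x, h) \<partial>Pg \<partial>PX)"
    by (rule Pg.nn_integral_fst[symmetric]) (rule Fm)
  also have "\<dots> = (\<integral>\<^sup>+w. ennreal (\<Prod>n<K. 1 / (1 + \<beta> (X n w)) ^ Suc k) \<partial>M)"
    unfolding inner PX_def by (subst nn_integral_distr) auto
  finally show ?thesis .
qed

lemma (in prob_space) decseq_unit_limit:
  fixes F :: "nat \<Rightarrow> 'a \<Rightarrow> real"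
  assumes Fm: "\<And>i. F i \<in> borel_measurable M"
    and F01: "\<And>i x. 0 \<le> F i x \<and> F i x \<le> 1" and Fdec: "\<And>i x. F (Suc i) x \<le> F i x"
  shows "\<And>x. (\<lambda>i. F i x) \<longlonglongrightarrow> lim (\<lambda>i. F i x)"
    and "\<And>x i. lim (\<lambda>i. F i x) \<le> F i x"
    and "integrable M (\<lambda>x. lim (\<lambda>i. F i x))"
    and "(\<lambda>i. expectation (F i)) \<longlonglongrightarrow> expectation (\<lambda>x. lim (\<lambda>i. F i x))"
proof -
  have conv: "(\<lambda>i. F i x) \<longlonglongrightarrow> lim (\<lambda>i. F i x) \<and> (\<forall>i. lim (\<lambda>i. F i x) \<le> F i x)" for x
  proof -
    have "decseq (\<lambda>i. F i x)" using Fdec by (simp add: decseq_Suc_iff)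
    then obtain L where L: "(\<lambda>i. F i x) \<longlonglongrightarrow> L" "\<forall>i. L \<le> F i x"
      using decseq_convergent[of "\<lambda>i. F i x" 0] F01 by blast
    then show ?thesis using limI[OF L(1)] by simp
  qed
  show c: "\<And>x. (\<lambda>i. F i x) \<longlonglongrightarrow> lim (\<lambda>i. F i x)" using conv by blast
  show "\<And>x i. lim (\<lambda>i. F i x) \<le> F i x" using conv by blast
  have lm: "(\<lambda>x. lim (\<lambda>i. F i x)) \<in> borel_measurable M"
    by (rule borel_measurable_LIMSEQ_real[OF c Fm])
  have b: "\<And>i. AE x in M. norm (F i x) \<le> 1" using F01 by auto
  show "integrable M (\<lambda>x. lim (\<lambda>i. F i x))"
    by (rule integrable_dominated_convergence[where w="\<lambda>_. 1" and s=F]) (use lm Fm c b in auto)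
  show "(\<lambda>i. expectation (F i)) \<longlonglongrightarrow> expectation (\<lambda>x. lim (\<lambda>i. F i x))"
    by (rule integral_dominated_convergence[where w="\<lambda>_. 1" and s=F]) (use lm Fm c b in auto)
qed

lemma summable_if_exp_partial_sums_bounded_below:
  fixes t :: "nat \<Rightarrow> real"
  assumes t0: "\<And>n. 0 \<le> t n" and s: "0 < s" and L: "0 < L"
    and bound: "\<And>K. L \<le> exp (- s * (\<Sum>n<K. t n))"
  shows "summable t"
proof (rule summableI_nonneg_bounded[OF t0])
  fix K
  have "ln L \<le> ln (exp (- s * (\<Sum>n<K. t n)))" using bound[of K] L by (subst ln_le_cancel_iff) auto
  then have "ln L \<le> - s * (\<Sum>n<K. t n)" by simp
  then show "(\<Sum>n<K. t n) \<le> - ln L / s" using s by (simp add: field_simps)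
qed

lemma (in prob_space) AE_summable_if_laplace_tendsto_1:
  fixes t :: "nat \<Rightarrow> 'a \<Rightarrow> real" and L :: "real \<Rightarrow> real"
  assumes tm: "\<And>n. t n \<in> borel_measurable M" and t0: "\<And>n x. 0 \<le> t n x"
    and laplace: "\<And>s. 0 < s \<Longrightarrow> (\<lambda>K. expectation (\<lambda>x. exp (- s * (\<Sum>n<K. t n x)))) \<longlonglongrightarrow> L s"
    and L1: "(L \<longlongrightarrow> 1) (at_right 0)"
  shows "AE x in M. summable (\<lambda>n. t n x)"
proof -
  note tm[measurable]
  define S where "S = {x \<in> space M. Cauchy (\<lambda>K. \<Sum>n<K. t n x)}"
  have "(\<lambda>x. \<Sum>n<K. t n x) \<in> borel_measurable M" for K by measurable
  then have S: "S \<in> sets M" unfolding S_def by (rule sets_Collect_Cauchy)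
  have "L s \<le> prob S" if s: "0 < s" for s
  proof -
    define F where "F K x = exp (- s * (\<Sum>n<K. t n x))" for K x
    have Fm: "F K \<in> borel_measurable M" for K unfolding F_def by measurable
    have F01: "0 \<le> F K x \<and> F K x \<le> 1" for K x
      using s t0 by (auto simp: F_def intro!: sum_nonneg mult_nonneg_nonneg)
    have Fdec: "F (Suc K) x \<le> F K x" for K x
      using s t0 by (auto simp: F_def intro!: mult_left_mono)
    note lim = decseq_unit_limit[where F=F, OF Fm F01 Fdec]
    have "L s = expectation (\<lambda>x. lim (\<lambda>K. F K x))"
      using LIMSEQ_unique[OF laplace[OF s] lim(4)[unfolded F_def]] by (simp add: F_def)
    also have "\<dots> \<le> expectation (indicator S)"
    proof (rule integral_mono[OF lim(3)])
      show "integrable M (indicator S :: 'a \<Rightarrow> real)" using S by (simp add: less_top[symmetric])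
      fix x assume x: "x \<in> space M"
      have "lim (\<lambda>K. F K x) \<le> 0" if "x \<notin> S"
      proof (rule ccontr)
        assume "\<not> lim (\<lambda>K. F K x) \<le> 0"
        moreover note lim(2)[of x]
        ultimately have "summable (\<lambda>n. t n x)"
          by (intro summable_if_exp_partial_sums_bounded_below[where t="\<lambda>n. t n x", OF t0 s])
             (auto simp: F_def)
        then show False using that x by (simp add: S_def summable_iff_convergent Cauchy_convergent_iff)
      qed
      moreover have "lim (\<lambda>K. F K x) \<le> 1" using lim(2)[of x 0] by (simp add: F_def)
      ultimately show "lim (\<lambda>K. F K x) \<le> indicator S x" by (auto split: split_indicator)
    qed
    finally show ?thesis using S by (simp add: measure_def)
  qed
  then have "1 \<le> prob S"
    by (intro tendsto_le[OF trivial_limit_at_right_real tendsto_const L1])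
       (use eventually_at_right_less[of 0] in \<open>auto elim: eventually_mono\<close>)
  then have "AE x in M. x \<in> S" using prob_le_1[of S] by (intro AE_prob_1) simp
  then show ?thesis by eventually_elim (simp add: S_def summable_iff_convergent Cauchy_convergent_iff)
qed

section \<open>The Laplace exponent\<close>

definition beta_integrand :: "real \<Rightarrow> nat \<Rightarrow> nat \<Rightarrow> real \<Rightarrow> real" where
  "beta_integrand \<delta> N p t = t powr (real p - \<delta> - 1) / (1 + t) ^ N"

definition real_inc_beta :: "real \<Rightarrow> nat \<Rightarrow> nat \<Rightarrow> real \<Rightarrow> real" where
  "real_inc_beta \<delta> N p z = integral {0..z} (beta_integrand \<delta> N p)"

lemma beta_integrand_nonneg: "t \<ge> 0 \<Longrightarrow> 0 \<le> beta_integrand \<delta> N p t"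
  by (simp add: beta_integrand_def)

lemma beta_integrand_le_powr: "t \<ge> 0 \<Longrightarrow> beta_integrand \<delta> N p t \<le> t powr (real p - \<delta> - 1)"
proof -
  assume t: "t \<ge> 0"
  have "1 \<le> (1 + t) ^ N" using t by (simp add: one_le_power)
  then have "t powr (real p - \<delta> - 1) / (1 + t) ^ N \<le> t powr (real p - \<delta> - 1) / 1"
    by (intro divide_left_mono) auto
  then show ?thesis by (simp add: beta_integrand_def)
qed

lemma beta_integrand_integrable:
  assumes d: "\<delta> < 1" and p: "p \<ge> 1" and z: "z \<ge> 0"
  shows "beta_integrand \<delta> N p integrable_on {0..z}"
proof -
  have e: "real p - \<delta> - 1 > -1" using d p by simp
  have g: "(\<lambda>t. t powr (real p - \<delta> - 1)) absolutely_integrable_on {0..z}"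
    by (rule nonnegative_absolutely_integrable_1[OF integrable_on_powr_from_0[OF e z]]) simp
  have c: "continuous_on {0..z} (\<lambda>t::real. 1 / (1 + t) ^ N)"
    by (intro continuous_intros) auto
  have "(\<lambda>t. 1 / (1 + t) ^ N * t powr (real p - \<delta> - 1)) absolutely_integrable_on {0..z}"
  proof (rule absolutely_integrable_bounded_measurable_product_real)
    show "(\<lambda>t::real. 1 / (1 + t) ^ N) \<in> borel_measurable (lebesgue_on {0..z})"
      by (rule continuous_imp_measurable_on_sets_lebesgue[OF c]) auto
    show "bounded ((\<lambda>t::real. 1 / (1 + t) ^ N) ` {0..z})"
      by (rule compact_imp_bounded, rule compact_continuous_image[OF c]) auto
  qed (use g in auto)
  then have "(\<lambda>t. 1 / (1 + t) ^ N * t powr (real p - \<delta> - 1)) integrable_on {0..z}"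
    using set_lebesgue_integral_eq_integral(1) absolutely_integrable_on_def by blast
  then show ?thesis by (simp add: beta_integrand_def[abs_def] field_simps)
qed

lemma real_inc_beta_bounds:
  assumes d: "0 < \<delta>" "\<delta> < 1" and p: "p \<ge> 1" and z: "z \<ge> 0"
  shows "0 \<le> real_inc_beta \<delta> N p z" "real_inc_beta \<delta> N p z \<le> z powr (real p - \<delta>) / (real p - \<delta>)"
proof -
  have e: "real p - \<delta> - 1 > -1" using d p by simp
  show "0 \<le> real_inc_beta \<delta> N p z" unfolding real_inc_beta_def
    by (rule integral_nonneg[OF beta_integrand_integrable[OF d(2) p z]]) (simp add: beta_integrand_nonneg)
  have "real_inc_beta \<delta> N p z \<le> integral {0..z} (\<lambda>t. t powr (real p - \<delta> - 1))" unfolding real_inc_beta_def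
    by (rule integral_le[OF beta_integrand_integrable[OF d(2) p z] integrable_on_powr_from_0[OF e z]]) (simp add: beta_integrand_le_powr)
  also have "\<dots> = z powr (real p - \<delta> - 1 + 1) / (real p - \<delta> - 1 + 1)"
    by (rule integral_unique[OF has_integral_powr_from_0[OF e z]])
  finally show "real_inc_beta \<delta> N p z \<le> z powr (real p - \<delta>) / (real p - \<delta>)" by simp
qed

lemma real_inc_beta_has_derivative:
  assumes d: "\<delta> < 1" and p: "p \<ge> 1" and z: "z > 0"
  shows "(real_inc_beta \<delta> N p has_real_derivative beta_integrand \<delta> N p z) (at z)"
proof -
  define a where "a = z/2"
  define b where "b = 2*z"
  have ab: "0 < a" "a < z" "z < b" using z by (auto simp: a_def b_def)
  have cont: "continuous_on {a..b} (beta_integrand \<delta> N p)"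
    unfolding beta_integrand_def[abs_def] using ab by (intro continuous_intros) auto
  have d1: "((\<lambda>x. integral {a..x} (beta_integrand \<delta> N p)) has_real_derivative beta_integrand \<delta> N p z) (at z)"
    using integral_has_real_derivative[OF cont, of z] ab by (simp add: at_within_Icc_at)
  have d2: "((\<lambda>x. real_inc_beta \<delta> N p a + integral {a..x} (beta_integrand \<delta> N p)) has_real_derivative beta_integrand \<delta> N p z) (at z)"
    using DERIV_add[OF DERIV_const d1] by simp
  show ?thesis
  proof (rule has_field_derivative_transform_within_open[OF d2, of "{a<..}"])
    fix x :: real assume "x \<in> {a<..}"
    then have "a \<le> x" "0 \<le> a" using ab by auto
    then show "real_inc_beta \<delta> N p a + integral {a..x} (beta_integrand \<delta> N p) = real_inc_beta \<delta> N p x"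
      unfolding real_inc_beta_def
      by (intro Henstock_Kurzweil_Integration.integral_combine beta_integrand_integrable[OF d p]) auto
  qed (use ab in auto)
qed

text \<open>The Laplace transform of a Gamma(N,1) mark at c r^(-2/\<delta>): the factor contributed by a point at
  distance r.\<close>
definition mark_laplace :: "real \<Rightarrow> real \<Rightarrow> nat \<Rightarrow> real \<Rightarrow> real" where
  "mark_laplace c \<delta> N r = 1 / (1 + c * r powr (-(2/\<delta>))) ^ N"

text \<open>The closed form of G(v), the integral of 1 - mark_laplace c \<delta> N |y| over the region |y|^2 > v
  of the plane: the substitution t = c |y|^(-2/\<delta>) and the binomial expansion of 1 - (1+t)^(-N)
  give the sum below, and its derivative in v is -pi (1 - mark_laplace c \<delta> N (sqrt v)).\<close>
definition laplace_exponent :: "real \<Rightarrow> real \<Rightarrow> nat \<Rightarrow> real \<Rightarrow> real" where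
  "laplace_exponent c \<delta> N v = pi * \<delta> * c powr \<delta> * (\<Sum>p=1..N. real (N choose p) * real_inc_beta \<delta> N p (c * v powr (-1/\<delta>)))"

lemma mark_laplace_sqrt: "v > 0 \<Longrightarrow> \<delta> > 0 \<Longrightarrow> mark_laplace c \<delta> N (sqrt v) = 1 / (1 + c * v powr (-1/\<delta>)) ^ N"
proof -
  assume v: "v > 0" and d: "\<delta> > 0"
  have "sqrt v powr (-(2/\<delta>)) = (v powr (1/2)) powr (-(2/\<delta>))" using v by (simp add: powr_half_sqrt)
  also have "\<dots> = v powr (-1/\<delta>)" by (simp add: powr_powr)
  finally show ?thesis by (simp add: mark_laplace_def)
qed

lemma mark_laplace_mono:
  assumes c: "c > 0" and d: "\<delta> > 0" and r: "0 < r" "r \<le> r'"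
  shows "mark_laplace c \<delta> N r \<le> mark_laplace c \<delta> N r'"
proof -
  have "r' powr (-(2/\<delta>)) \<le> r powr (-(2/\<delta>))"
    using r d by (intro powr_mono2') auto
  then have "1 + c * r' powr (-(2/\<delta>)) \<le> 1 + c * r powr (-(2/\<delta>))" using c by simp
  moreover have "0 < 1 + c * r' powr (-(2/\<delta>))" using c by (simp add: add_pos_nonneg)
  ultimately show ?thesis unfolding mark_laplace_def
    by (intro divide_left_mono power_mono mult_pos_pos zero_less_power) auto
qed

lemma mark_laplace_bounds: "c > 0 \<Longrightarrow> 0 \<le> mark_laplace c \<delta> N r \<and> mark_laplace c \<delta> N r \<le> 1"
proof -
  assume c: "c > 0"
  have "1 \<le> 1 + c * r powr (-(2/\<delta>))" using c by simp
  then have "1 \<le> (1 + c * r powr (-(2/\<delta>))) ^ N" by (rule one_le_power)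
  then show ?thesis unfolding mark_laplace_def by simp
qed

lemma powr_exponents_telescope:
  assumes c: "c > 0" and v: "v > 0" and d: "\<delta> > 0"
  defines "z \<equiv> c * v powr (-1/\<delta>)"
  shows "c powr \<delta> * c * z powr (real p - \<delta> - 1) * v powr (-1/\<delta> - 1) = z ^ p"
proof -
  have z: "z > 0" using c v by (simp add: z_def)
  have lz: "ln z = ln c - ln v / \<delta>" using c v by (simp add: z_def ln_mult ln_powr)
  have "c powr \<delta> * c * z powr (real p - \<delta> - 1) * v powr (-1/\<delta> - 1)
      = exp (\<delta> * ln c) * exp (ln c) * exp ((real p - \<delta> - 1) * ln z) * exp ((-1/\<delta> - 1) * ln v)"
    using c v z by (simp add: powr_def)
  also have "\<dots> = exp (\<delta> * ln c + ln c + (real p - \<delta> - 1) * ln z + (-1/\<delta> - 1) * ln v)"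
    by (simp add: exp_add)
  also have "\<delta> * ln c + ln c + (real p - \<delta> - 1) * ln z + (-1/\<delta> - 1) * ln v = real p * ln z"
    using d unfolding lz by (simp add: field_simps)
  also have "exp (real p * ln z) = z ^ p" using z powr_realpow[OF z, of p] by (simp add: powr_def)
  finally show ?thesis .
qed

lemma sum_binomial_from_1: "(\<Sum>p=1..N. real (N choose p) * z ^ p) = (1 + z) ^ N - 1"
proof -
  have "(1 + z) ^ N = (z + 1) ^ N" by (simp add: add.commute)
  also have "\<dots> = (\<Sum>k\<le>N. real (N choose k) * z ^ k)" by (simp add: binomial_ring)
  also have "{..N} = insert 0 {1..N}" by auto
  also have "(\<Sum>k\<in>insert 0 {1..N}. real (N choose k) * z ^ k) = 1 + (\<Sum>p=1..N. real (N choose p) * z ^ p)"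
    by (subst sum.insert) auto
  finally show ?thesis by simp
qed

lemma laplace_exponent_has_derivative:
  assumes c: "c > 0" and d: "0 < \<delta>" "\<delta> < 1" and v: "v > 0"
  shows "(laplace_exponent c \<delta> N has_real_derivative -(pi * (1 - mark_laplace c \<delta> N (sqrt v)))) (at v)"
proof -
  define z where "z = c * v powr (-1/\<delta>)"
  have z: "z > 0" using c v by (simp add: z_def)
  define zd where "zd = c * ((-1/\<delta>) * v powr (-1/\<delta> - 1))"
  have dz: "((\<lambda>v. c * v powr (-1/\<delta>)) has_real_derivative zd) (at v)"
    unfolding zd_def by (intro DERIV_cmult has_real_derivative_powr v)
  have dp: "((\<lambda>v. real (N choose p) * real_inc_beta \<delta> N p (c * v powr (-1/\<delta>))) has_real_derivative
              real (N choose p) * (beta_integrand \<delta> N p z * zd)) (at v)" if "p \<in> {1..N}" for p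
  proof -
    have "((\<lambda>v. real_inc_beta \<delta> N p (c * v powr (-1/\<delta>))) has_real_derivative beta_integrand \<delta> N p z * zd) (at v)"
      using DERIV_chain'[OF dz real_inc_beta_has_derivative[OF d(2) _ z[unfolded z_def]]] that by (simp add: z_def)
    then show ?thesis by (rule DERIV_cmult)
  qed
  have D: "(laplace_exponent c \<delta> N has_real_derivative
      pi * \<delta> * c powr \<delta> * (\<Sum>p=1..N. real (N choose p) * (beta_integrand \<delta> N p z * zd))) (at v)"
    unfolding laplace_exponent_def[abs_def] by (intro DERIV_cmult DERIV_sum dp)
  have t: "pi * \<delta> * c powr \<delta> * (beta_integrand \<delta> N p z * zd) = - pi * (z ^ p / (1 + z) ^ N)" for p
  proof -
    have "pi * \<delta> * c powr \<delta> * (beta_integrand \<delta> N p z * zd)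
        = - pi * (c powr \<delta> * c * z powr (real p - \<delta> - 1) * v powr (-1/\<delta> - 1)) / (1 + z) ^ N"
      using d by (simp add: beta_integrand_def zd_def field_simps)
    also have "\<dots> = - pi * (z ^ p / (1 + z) ^ N)"
      using powr_exponents_telescope[OF c v d(1), of p] by (simp add: z_def)
    finally show ?thesis .
  qed
  have "pi * \<delta> * c powr \<delta> * (\<Sum>p=1..N. real (N choose p) * (beta_integrand \<delta> N p z * zd))
      = (\<Sum>p=1..N. real (N choose p) * (pi * \<delta> * c powr \<delta> * (beta_integrand \<delta> N p z * zd)))"
    by (simp add: sum_distrib_left mult_ac)
  also have "\<dots> = (\<Sum>p=1..N. real (N choose p) * (- pi * (z ^ p / (1 + z) ^ N)))"
    by (simp only: t)
  also have "\<dots> = - pi * (\<Sum>p=1..N. real (N choose p) * z ^ p) / (1 + z) ^ N"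
    by (simp add: sum_distrib_left sum_divide_distrib mult_ac)
  also have "\<dots> = - pi * ((1 + z) ^ N - 1) / (1 + z) ^ N" by (simp only: sum_binomial_from_1)
  also have "\<dots> = -(pi * (1 - mark_laplace c \<delta> N (sqrt v)))"
    using z mark_laplace_sqrt[OF v d(1), of c N] by (simp add: z_def field_simps)
  finally show ?thesis using D by simp
qed

lemma laplace_exponent_diff_bounds:
  assumes c: "c > 0" and d: "0 < \<delta>" "\<delta> < 1" and v: "0 < v" "v \<le> v'"
  shows "(v' - v) * pi * (1 - mark_laplace c \<delta> N (sqrt v')) \<le> laplace_exponent c \<delta> N v - laplace_exponent c \<delta> N v'"
    "laplace_exponent c \<delta> N v - laplace_exponent c \<delta> N v' \<le> (v' - v) * pi * (1 - mark_laplace c \<delta> N (sqrt v))"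
proof -
  have "(v' - v) * pi * (1 - mark_laplace c \<delta> N (sqrt v')) \<le> laplace_exponent c \<delta> N v - laplace_exponent c \<delta> N v'
      \<and> laplace_exponent c \<delta> N v - laplace_exponent c \<delta> N v' \<le> (v' - v) * pi * (1 - mark_laplace c \<delta> N (sqrt v))"
  proof (cases "v = v'")
    case True then show ?thesis by simp
  next
    case False
    then have vv: "v < v'" using v by simp
    obtain \<xi> where xi: "v < \<xi>" "\<xi> < v'"
      "laplace_exponent c \<delta> N v' - laplace_exponent c \<delta> N v = (v' - v) * -(pi * (1 - mark_laplace c \<delta> N (sqrt \<xi>)))"
      using MVT2[OF vv, of "laplace_exponent c \<delta> N" "\<lambda>x. -(pi * (1 - mark_laplace c \<delta> N (sqrt x)))"]
        laplace_exponent_has_derivative[OF c d] v by force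
    have m1: "mark_laplace c \<delta> N (sqrt v) \<le> mark_laplace c \<delta> N (sqrt \<xi>)"
      using xi v by (intro mark_laplace_mono c d(1)) auto
    have m2: "mark_laplace c \<delta> N (sqrt \<xi>) \<le> mark_laplace c \<delta> N (sqrt v')"
      using xi v by (intro mark_laplace_mono c d(1)) auto
    have e: "laplace_exponent c \<delta> N v - laplace_exponent c \<delta> N v' = (v' - v) * pi * (1 - mark_laplace c \<delta> N (sqrt \<xi>))"
      using xi(3) by (simp add: algebra_simps)
    have p: "0 \<le> (v' - v) * pi" using vv by simp
    show ?thesis unfolding e using m1 m2 p
      by (auto intro!: mult_left_mono simp: mult.assoc[symmetric])
  qed
  then show "(v' - v) * pi * (1 - mark_laplace c \<delta> N (sqrt v')) \<le> laplace_exponent c \<delta> N v - laplace_exponent c \<delta> N v'"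
    "laplace_exponent c \<delta> N v - laplace_exponent c \<delta> N v' \<le> (v' - v) * pi * (1 - mark_laplace c \<delta> N (sqrt v))" by auto
qed

lemma laplace_exponent_bounds:
  assumes c: "c > 0" and d: "0 < \<delta>" "\<delta> < 1" and v: "v > 0"
  shows "0 \<le> laplace_exponent c \<delta> N v"
    "laplace_exponent c \<delta> N v \<le> pi * \<delta> * (\<Sum>p=1..N. real (N choose p) * (c ^ p * v powr (-(real p - \<delta>)/\<delta>) / (real p - \<delta>)))"
proof -
  define z where "z = c * v powr (-1/\<delta>)"
  have z: "z > 0" using c v by (simp add: z_def)
  show "0 \<le> laplace_exponent c \<delta> N v" unfolding laplace_exponent_def using real_inc_beta_bounds(1)[OF d _ less_imp_le[OF z]] d
    by (intro mult_nonneg_nonneg sum_nonneg) (auto simp: z_def)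
  have e: "c powr \<delta> * (z powr (real p - \<delta>) / (real p - \<delta>)) = c ^ p * v powr (-(real p - \<delta>)/\<delta>) / (real p - \<delta>)" for p
  proof -
    have "c powr \<delta> * z powr (real p - \<delta>) = c powr \<delta> * (c powr (real p - \<delta>) * (v powr (-1/\<delta>)) powr (real p - \<delta>))"
      using c v by (simp add: z_def powr_mult)
    also have "\<dots> = c powr (\<delta> + (real p - \<delta>)) * v powr (-(real p - \<delta>)/\<delta>)"
    proof -
      have a: "c powr \<delta> * c powr (real p - \<delta>) = c powr (\<delta> + (real p - \<delta>))" by (simp only: powr_add)
      have b: "(v powr (-1/\<delta>)) powr (real p - \<delta>) = v powr (-(real p - \<delta>)/\<delta>)"
        unfolding powr_powr by (intro arg_cong[where f="\<lambda>e. v powr e"]) (use d in \<open>simp add: field_simps\<close>)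
      show ?thesis by (metis a b mult.assoc)
    qed
    also have "\<dots> = c ^ p * v powr (-(real p - \<delta>)/\<delta>)" using c by (simp add: powr_realpow)
    finally show ?thesis by simp
  qed
  have "laplace_exponent c \<delta> N v = pi * \<delta> * (\<Sum>p=1..N. real (N choose p) * (c powr \<delta> * real_inc_beta \<delta> N p z))"
    unfolding laplace_exponent_def z_def by (simp add: sum_distrib_left mult_ac)
  also have "\<dots> \<le> pi * \<delta> * (\<Sum>p=1..N. real (N choose p) * (c powr \<delta> * (z powr (real p - \<delta>) / (real p - \<delta>))))"
    using d real_inc_beta_bounds(2)[OF d _ less_imp_le[OF z]]
    by (intro mult_left_mono sum_mono) auto
  finally show "laplace_exponent c \<delta> N v \<le> pi * \<delta> * (\<Sum>p=1..N. real (N choose p) * (c ^ p * v powr (-(real p - \<delta>)/\<delta>) / (real p - \<delta>)))"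
    by (simp only: e)
qed

lemma laplace_exponent_tendsto_0_at_top:
  assumes c: "c > 0" and d: "0 < \<delta>" "\<delta> < 1"
  shows "(laplace_exponent c \<delta> N \<longlongrightarrow> 0) at_top"
proof (rule tendsto_sandwich[where f="\<lambda>_. 0"])
  show "\<forall>\<^sub>F v in at_top. 0 \<le> laplace_exponent c \<delta> N v"
    using eventually_gt_at_top[of 0] by eventually_elim (rule laplace_exponent_bounds(1)[OF c d])
  show "\<forall>\<^sub>F v in at_top. laplace_exponent c \<delta> N v \<le> pi * \<delta> * (\<Sum>p=1..N. real (N choose p) * (c ^ p * v powr (-(real p - \<delta>)/\<delta>) / (real p - \<delta>)))"
    using eventually_gt_at_top[of 0] by eventually_elim (rule laplace_exponent_bounds(2)[OF c d])
  have "((\<lambda>v. v powr (-(real p - \<delta>)/\<delta>)) \<longlongrightarrow> 0) at_top" if "p \<in> {1..N}" for p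
  proof -
    have "real p - \<delta> > 0" using that d by auto
    then have "-(real p - \<delta>)/\<delta> < 0" using d by (intro divide_neg_pos) auto
    then show ?thesis by (intro tendsto_neg_powr filterlim_ident)
  qed
  then have "((\<lambda>v. pi * \<delta> * (\<Sum>p=1..N. real (N choose p) * (c ^ p * v powr (-(real p - \<delta>)/\<delta>) / (real p - \<delta>)))) \<longlongrightarrow>
       pi * \<delta> * (\<Sum>p=1..N. real (N choose p) * (c ^ p * 0 / (real p - \<delta>)))) at_top"
    using d by (intro tendsto_intros) force+
  then show "((\<lambda>v. pi * \<delta> * (\<Sum>p=1..N. real (N choose p) * (c ^ p * v powr (-(real p - \<delta>)/\<delta>) / (real p - \<delta>)))) \<longlongrightarrow> 0) at_top"
    by simp
qed simp

lemma laplace_exponent_tendsto_0_at_right: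
  assumes d: "0 < \<delta>" "\<delta> < 1" and v: "v > 0"
  shows "((\<lambda>c. laplace_exponent c \<delta> N v) \<longlongrightarrow> 0) (at_right 0)"
proof (rule tendsto_sandwich[where f="\<lambda>_. 0"])
  define B where "B c = pi * \<delta> * (\<Sum>p=1..N. real (N choose p) * (c ^ p * v powr (-(real p - \<delta>)/\<delta>) / (real p - \<delta>)))" for c
  show "\<forall>\<^sub>F c in at_right 0. 0 \<le> laplace_exponent c \<delta> N v"
    using eventually_at_right_less[of 0] by eventually_elim (rule laplace_exponent_bounds(1)[OF _ d v])
  show "\<forall>\<^sub>F c in at_right 0. laplace_exponent c \<delta> N v \<le> B c"
    using eventually_at_right_less[of 0] unfolding B_def
    by eventually_elim (rule laplace_exponent_bounds(2)[OF _ d v])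
  have "(B \<longlongrightarrow> B 0) (at_right 0)" unfolding B_def by (intro tendsto_intros) (use d in force)+
  moreover have "B 0 = 0" unfolding B_def by (intro mult_eq_0_iff[THEN iffD2] disjI2 sum.neutral) auto
  ultimately show "(B \<longlongrightarrow> 0) (at_right 0)" by simp
qed simp

section \<open>The complex incomplete Beta function\<close>

lemma powr_of_real_neg:
  assumes Z: "Z > 0" and u: "u \<ge> 0"
  shows "complex_of_real (-(Z*u)) powr complex_of_real e = complex_of_real ((Z*u) powr e) * exp (\<i> * pi * e)"
proof (cases "u = 0")
  case True then show ?thesis by (simp add: powr_of_real_if)
next
  case False
  then have "Z * u > 0" using Z u by simp
  then show ?thesis by (subst powr_of_real_if) simp
qed

lemma has_integral_real_inc_beta_rescaled:
  assumes Z: "Z > 0" and d: "\<delta> < 1" and p: "p \<ge> 1"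
  shows "((\<lambda>u. Z * beta_integrand \<delta> N p (Z * u)) has_integral real_inc_beta \<delta> N p Z) {0..1}"
proof -
  have i: "(beta_integrand \<delta> N p has_integral real_inc_beta \<delta> N p Z) {0..Z}"
    unfolding real_inc_beta_def using beta_integrand_integrable[OF d p, of Z] Z by (simp add: integrable_integral)
  have img: "(\<lambda>x. x / Z) ` {0..Z} = {0..1::real}"
  proof
    show "(\<lambda>x. x / Z) ` {0..Z} \<subseteq> {0..1}" using Z by auto
    show "{0..1} \<subseteq> (\<lambda>x. x / Z) ` {0..Z}"
    proof
      fix u :: real assume "u \<in> {0..1}"
      then have "u = (Z * u) / Z" "Z * u \<in> {0..Z}" using Z by (auto simp: mult_le_cancel_left1)
      then show "u \<in> (\<lambda>x. x / Z) ` {0..Z}" by (rule image_eqI)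
    qed
  qed
  have "((\<lambda>u. beta_integrand \<delta> N p (Z * u)) has_integral (1 / \<bar>Z\<bar>) *\<^sub>R real_inc_beta \<delta> N p Z) {0..1}"
    using has_integral_stretch_real[OF i, of Z] Z img by simp
  from has_integral_mult_right[OF this, of Z] show ?thesis using Z by simp
qed

lemma inc_beta_neg_real:
  assumes Z: "Z > 0" and d: "\<delta> < 1" and p: "p \<ge> 1"
  shows "inc_beta (complex_of_real (- Z)) (complex_of_real (real p - \<delta>)) (complex_of_real (1 - real N))
       = - exp (\<i> * pi * (real p - \<delta> - 1)) * complex_of_real (real_inc_beta \<delta> N p Z)"
proof -
  define E where "E = exp (\<i> * pi * (real p - \<delta> - 1))"
  have eq: "complex_of_real (- Z) * (complex_of_real (- Z) * complex_of_real u) powr (complex_of_real (real p - \<delta>) - 1)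
              * (1 - complex_of_real (- Z) * complex_of_real u) powr (complex_of_real (1 - real N) - 1)
            = (- E) * complex_of_real (Z * beta_integrand \<delta> N p (Z * u))" if u: "u \<in> {0..1}" for u
  proof -
    have u0: "u \<ge> 0" using u by simp
    have a: "complex_of_real (- Z) * complex_of_real u = complex_of_real (-(Z*u))" by simp
    have b: "complex_of_real (real p - \<delta>) - 1 = complex_of_real (real p - \<delta> - 1)" by simp
    have c1: "1 - complex_of_real (- Z) * complex_of_real u = complex_of_real (1 + Z*u)" by simp
    have d1: "complex_of_real (1 - real N) - 1 = complex_of_real (- real N)" by simp
    have c2: "1 - complex_of_real (-(Z*u)) = complex_of_real (1 + Z*u)" by simp
    have pos: "1 + Z * u > 0" using Z u0 by (simp add: add_pos_nonneg)
    have e: "(1 + Z*u) powr (- real N) = 1 / (1 + Z*u) ^ N"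
      using pos by (simp add: powr_minus powr_realpow divide_inverse)
    have "complex_of_real (- Z) * (complex_of_real (- Z) * complex_of_real u) powr (complex_of_real (real p - \<delta>) - 1)
              * (1 - complex_of_real (- Z) * complex_of_real u) powr (complex_of_real (1 - real N) - 1)
        = complex_of_real (- Z) * (complex_of_real ((Z*u) powr (real p - \<delta> - 1)) * E)
              * complex_of_real ((1 + Z*u) powr (- real N))"
      unfolding a b c1 c2 d1 powr_of_real_neg[OF Z u0] E_def powr_of_real[OF less_imp_le[OF pos]]
      by (rule refl)
    also have "\<dots> = (- E) * complex_of_real (Z * beta_integrand \<delta> N p (Z * u))"
      unfolding e beta_integrand_def by (simp add: algebra_simps)
    finally show ?thesis .
  qed
  have "((\<lambda>u. (- E) * complex_of_real (Z * beta_integrand \<delta> N p (Z * u))) has_integral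
              (- E) * complex_of_real (real_inc_beta \<delta> N p Z)) {0..1}"
    by (intro has_integral_mult_right has_integral_of_real has_integral_real_inc_beta_rescaled Z d p)
  then have "((\<lambda>u. complex_of_real (- Z) * (complex_of_real (- Z) * complex_of_real u) powr (complex_of_real (real p - \<delta>) - 1)
              * (1 - complex_of_real (- Z) * complex_of_real u) powr (complex_of_real (1 - real N) - 1)) has_integral
              (- E) * complex_of_real (real_inc_beta \<delta> N p Z)) {0..1}"
    by (rule has_integral_eq[rotated]) (rule eq[symmetric])
  then show ?thesis
    unfolding inc_beta_def E_def[symmetric] by (rule integral_unique)
qed

lemma inc_beta_term_eq_real_inc_beta:
  assumes c: "c > 0" and Z: "Z > 0" and d: "0 < \<delta>" "\<delta> < 1" and p: "p \<ge> 1"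
  shows "complex_of_real (c ^ p) * (complex_of_real (- c)) powr (complex_of_real (\<delta> - real p))
           * inc_beta (complex_of_real (- Z)) (complex_of_real (real p - \<delta>)) (complex_of_real (1 - real N))
         = complex_of_real (c powr \<delta> * real_inc_beta \<delta> N p Z)"
proof -
  define E where "E = exp (\<i> * pi * (real p - \<delta> - 1))"
  note ib = inc_beta_neg_real[OF Z d(2) p, of N, folded E_def]
  have ph: "complex_of_real (- c) powr complex_of_real (\<delta> - real p)
      = complex_of_real (c powr (\<delta> - real p)) * exp (\<i> * pi * (\<delta> - real p))"
    using c by (subst powr_of_real_if) simp
  have cc: "c ^ p * c powr (\<delta> - real p) = c powr \<delta>"
    using c by (simp add: powr_realpow[symmetric] powr_add[symmetric])
  have ee: "exp (\<i> * pi * (\<delta> - real p)) * E = -1"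
  proof -
    have "exp (\<i> * pi * (\<delta> - real p)) * E = exp (\<i> * pi * (\<delta> - real p) + \<i> * pi * (real p - \<delta> - 1))"
      unfolding E_def by (simp add: exp_add)
    also have "\<i> * pi * (\<delta> - real p) + \<i> * pi * (real p - \<delta> - 1) = - (\<i> * complex_of_real pi)"
      by (simp add: algebra_simps)
    also have "exp (- (\<i> * complex_of_real pi)) = -1"
      by (simp add: exp_minus)
    finally show ?thesis .
  qed
  have "complex_of_real (c ^ p) * (complex_of_real (- c)) powr (complex_of_real (\<delta> - real p))
           * inc_beta (complex_of_real (- Z)) (complex_of_real (real p - \<delta>)) (complex_of_real (1 - real N))
      = - complex_of_real (c ^ p * c powr (\<delta> - real p)) * (exp (\<i> * pi * (\<delta> - real p)) * E)
          * complex_of_real (real_inc_beta \<delta> N p Z)"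
    unfolding ph ib by (simp add: algebra_simps)
  also have "\<dots> = complex_of_real (c powr \<delta> * real_inc_beta \<delta> N p Z)"
    unfolding cc ee by simp
  finally show ?thesis .
qed

lemma laplace_exponent_eq_inc_beta_sum:
  assumes c: "c > 0" and \<omega>: "\<omega> > 0" and \<alpha>: "\<alpha> > 2"
  shows "complex_of_real (laplace_exponent c (2/\<alpha>) N (\<omega>^2))
       = complex_of_real (pi * (2/\<alpha>)) *
         (\<Sum>p=1..N. of_nat (N choose p) * complex_of_real (c ^ p)
            * complex_of_real (- c) powr complex_of_real (2/\<alpha> - real p)
            * inc_beta (complex_of_real (- c * \<omega> powr (- \<alpha>)))
                (complex_of_real (real p - 2/\<alpha>)) (complex_of_real (1 - real N)))"
proof -
  define \<delta> where "\<delta> = 2 / \<alpha>"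
  have d: "0 < \<delta>" "\<delta> < 1" using \<alpha> by (auto simp: \<delta>_def)
  define W where "W = \<omega> powr (- \<alpha>)"
  have W: "W > 0" using \<omega> by (simp add: W_def)
  have \<omega>W: "(\<omega>^2) powr (-1/\<delta>) = W"
  proof -
    have "(\<omega>^2) powr (-1/\<delta>) = (\<omega> powr 2) powr (-1/\<delta>)" using \<omega> by (simp add: powr_realpow)
    also have "\<dots> = \<omega> powr (2 * (-1/\<delta>))" by (simp add: powr_powr)
    also have "2 * (-1/\<delta>) = - \<alpha>" using \<alpha> by (simp add: \<delta>_def)
    finally show ?thesis by (simp add: W_def)
  qed
  have "(\<Sum>p=1..N. of_nat (N choose p) * complex_of_real (c ^ p)
            * complex_of_real (- c) powr complex_of_real (\<delta> - real p)
            * inc_beta (complex_of_real (- c * \<omega> powr (- \<alpha>)))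
                (complex_of_real (real p - \<delta>)) (complex_of_real (1 - real N)))
      = (\<Sum>p=1..N. complex_of_real (real (N choose p) * (c powr \<delta> * real_inc_beta \<delta> N p (c * W))))"
  proof (rule sum.cong[OF refl])
    fix p assume p: "p \<in> {1..N}"
    have "complex_of_real (- c * \<omega> powr (- \<alpha>)) = complex_of_real (- (c * W))" by (simp add: W_def)
    then show "of_nat (N choose p) * complex_of_real (c ^ p)
            * complex_of_real (- c) powr complex_of_real (\<delta> - real p)
            * inc_beta (complex_of_real (- c * \<omega> powr (- \<alpha>)))
                (complex_of_real (real p - \<delta>)) (complex_of_real (1 - real N))
        = complex_of_real (real (N choose p) * (c powr \<delta> * real_inc_beta \<delta> N p (c * W)))"
      using inc_beta_term_eq_real_inc_beta[OF c _ d, of "c * W" p N] c W p by (simp add: mult.assoc)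
  qed
  then show ?thesis
    unfolding \<delta>_def[symmetric] laplace_exponent_def \<omega>W
    by (simp add: sum_distrib_left mult_ac)
qed
section \<open>The probability generating functional via annuli\<close>

definition annulus :: "real \<Rightarrow> real \<Rightarrow> nat \<Rightarrow> (real^2) set" where
  "annulus \<omega> h j = {y. \<omega>^2 + real j * h < norm y ^ 2 \<and> norm y ^ 2 \<le> \<omega>^2 + real (Suc j) * h}"

definition annulus_index :: "real \<Rightarrow> real \<Rightarrow> real^2 \<Rightarrow> nat" where
  "annulus_index \<omega> h y = nat \<lceil>(norm y ^ 2 - \<omega>^2) / h\<rceil> - 1"

lemma annulus_index_mem:
  assumes w: "\<omega> > 0" and h: "h > 0" and y: "\<omega> < norm y"
  shows "y \<in> annulus \<omega> h (annulus_index \<omega> h y)"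
proof -
  define q where "q = (norm y ^ 2 - \<omega>^2) / h"
  have "\<omega>^2 < norm y ^ 2" using w y by (simp add: power_strict_mono)
  then have "q > 0" using h by (simp add: q_def)
  then have c1: "\<lceil>q\<rceil> \<ge> 1" by (simp add: ceiling_le_iff[symmetric] zero_less_ceiling)
  have gen: "\<And>m::int. 1 \<le> m \<Longrightarrow> 1 \<le> nat m" by (metis nat_mono nat_one_as_int)
  have n1: "nat \<lceil>q\<rceil> \<ge> 1" using gen[OF c1] .
  have "real (nat \<lceil>q\<rceil> - 1) = real (nat \<lceil>q\<rceil>) - 1" using n1 by (simp add: of_nat_diff)
  also have "real (nat \<lceil>q\<rceil>) = real_of_int \<lceil>q\<rceil>" using c1 by simp
  finally have j: "real (annulus_index \<omega> h y) = real_of_int \<lceil>q\<rceil> - 1"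
    by (simp add: annulus_index_def q_def[symmetric])
  have "real_of_int \<lceil>q\<rceil> - 1 < q" "q \<le> real_of_int \<lceil>q\<rceil>" by linarith+
  then have "real (annulus_index \<omega> h y) < q" "q \<le> real (annulus_index \<omega> h y) + 1" using j by auto
  then have "real (annulus_index \<omega> h y) * h < norm y ^ 2 - \<omega>^2" "norm y ^ 2 - \<omega>^2 \<le> (real (annulus_index \<omega> h y) + 1) * h"
    using h by (auto simp: q_def field_simps)
  then show ?thesis by (simp add: annulus_def algebra_simps)
qed

lemma annulus_index_eq:
  assumes h: "h > 0" and y: "y \<in> annulus \<omega> h j"
  shows "annulus_index \<omega> h y = j"
proof -
  define q where "q = (norm y ^ 2 - \<omega>^2) / h"
  have "real j * h < norm y ^ 2 - \<omega>^2" "norm y ^ 2 - \<omega>^2 \<le> (real j + 1) * h"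
    using y by (auto simp: annulus_def algebra_simps)
  then have "real j < q" "q \<le> real j + 1" using h by (auto simp: q_def field_simps)
  then have "\<lceil>q\<rceil> = int j + 1" by (intro ceiling_unique) auto
  then show ?thesis by (simp add: annulus_index_def q_def[symmetric] nat_int_add)
qed

lemma norm_in_annulus:
  assumes w: "\<omega> > 0" and h: "h > 0" and y: "y \<in> annulus \<omega> h j"
  shows "\<omega> < norm y" "sqrt (\<omega>^2 + real j * h) < norm y" "norm y \<le> sqrt (\<omega>^2 + real (Suc j) * h)"
    "\<omega> \<le> sqrt (\<omega>^2 + real j * h)"
proof -
  have a: "\<omega>^2 + real j * h < norm y ^ 2" "norm y ^ 2 \<le> \<omega>^2 + real (Suc j) * h" using y by (auto simp: annulus_def)
  have "\<omega>^2 \<le> \<omega>^2 + real j * h" using h by simp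
  then have "\<omega>^2 < norm y ^ 2" using a by linarith
  then show "\<omega> < norm y" using w by (meson norm_ge_zero power_less_imp_less_base)
  have "sqrt (norm y ^ 2) = norm y" by simp
  then show "sqrt (\<omega>^2 + real j * h) < norm y" using a(1) real_sqrt_less_mono by metis
  show "norm y \<le> sqrt (\<omega>^2 + real (Suc j) * h)" using a(2)
    by (metis norm_ge_zero real_le_rsqrt)
  show "\<omega> \<le> sqrt (\<omega>^2 + real j * h)" using \<open>\<omega>^2 \<le> \<omega>^2 + real j * h\<close> w
    by (simp add: real_le_rsqrt)
qed

lemma disjoint_family_annulus: "h > 0 \<Longrightarrow> disjoint_family (annulus \<omega> h)"
  unfolding disjoint_family_on_def using annulus_index_eq by blast

lemma annulus_eq_cball_diff:
  assumes w: "\<omega> > 0" and h: "h > 0"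
  shows "annulus \<omega> h j = cball 0 (sqrt (\<omega>^2 + real (Suc j) * h)) - cball 0 (sqrt (\<omega>^2 + real j * h))"
proof -
  have e: "norm y \<le> sqrt A \<longleftrightarrow> norm y ^ 2 \<le> A" if "A \<ge> 0" for y :: "real^2" and A
    using that by (metis norm_ge_zero real_le_rsqrt real_sqrt_le_iff real_sqrt_pow2 real_sqrt_unique)
  have A1: "\<omega>^2 + real j * h \<ge> 0" "\<omega>^2 + real (Suc j) * h \<ge> 0" using h by auto
  show ?thesis unfolding annulus_def using e[OF A1(1)] e[OF A1(2)] by (auto simp: not_le)
qed

lemma annulus_measure:
  assumes w: "\<omega> > 0" and h: "h > 0"
  shows "measure lborel (annulus \<omega> h j) = pi * h" "annulus \<omega> h j \<in> sets borel" "bounded (annulus \<omega> h j)"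
proof -
  let ?r1 = "sqrt (\<omega>^2 + real (Suc j) * h)" and ?r0 = "sqrt (\<omega>^2 + real j * h)"
  have r: "?r0 \<ge> 0" "?r1 \<ge> 0" "?r0 \<le> ?r1" using h by auto
  have cb: "measure lborel (cball (0::real^2) r) = pi * r^2" if "r \<ge> 0" for r
  proof -
    have "measure lborel (cball (0::real^2) r) = unit_ball_vol (real (2*1)) * r ^ 2"
      using emeasure_cball[OF that, of "0::real^2"] that by (simp add: measure_def)
    moreover have "unit_ball_vol 2 = pi" using unit_ball_vol_even[of 1] by simp
    ultimately show ?thesis by simp
  qed
  have sub: "cball (0::real^2) ?r0 \<subseteq> cball 0 ?r1" by (rule subset_cball[OF r(3)])
  show "measure lborel (annulus \<omega> h j) = pi * h"
    unfolding annulus_eq_cball_diff[OF w h]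
    apply (subst measure_Diff)
    using sub r h by (auto simp: cb emeasure_cball algebra_simps)
  show "annulus \<omega> h j \<in> sets borel" unfolding annulus_eq_cball_diff[OF w h] by auto
  show "bounded (annulus \<omega> h j)" unfolding annulus_eq_cball_diff[OF w h] by (rule bounded_diff) auto
qed

locale radial_weight =
  fixes \<omega> h :: real and \<Psi> :: "real \<Rightarrow> real" and \<phi> :: "real^2 \<Rightarrow> real"
  assumes omega_pos: "\<omega> > 0" and h_pos: "h > 0"
    and weight_mono: "\<And>r r'. \<omega> \<le> r \<Longrightarrow> r \<le> r' \<Longrightarrow> \<Psi> r \<le> \<Psi> r'"
    and weight_bounds: "\<And>r. \<omega> \<le> r \<Longrightarrow> 0 \<le> \<Psi> r \<and> \<Psi> r \<le> 1"
    and phi_eq: "\<And>y. \<phi> y = (if \<omega> < norm y then \<Psi> (norm y) else 1)"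
begin

definition "annulus_weight j = \<Psi> (sqrt (\<omega>^2 + real j * h))"

lemma phi_bounds: "0 \<le> \<phi> y" "\<phi> y \<le> 1"
  using weight_bounds[of "norm y"] by (auto simp: phi_eq)

lemma annulus_weight_bounds: "0 \<le> annulus_weight j" "annulus_weight j \<le> 1"
proof -
  have "\<omega> \<le> sqrt (\<omega>^2 + real j * h)" using omega_pos h_pos by (simp add: real_le_rsqrt)
  then show "0 \<le> annulus_weight j" "annulus_weight j \<le> 1" using weight_bounds by (auto simp: annulus_weight_def)
qed

lemma annulus_weight_phi_bounds:
  assumes "y \<in> annulus \<omega> h j"
  shows "annulus_weight j \<le> \<phi> y" "\<phi> y \<le> annulus_weight (Suc j)"
proof -
  note n = norm_in_annulus[OF omega_pos h_pos assms]
  have "\<phi> y = \<Psi> (norm y)" using n(1) by (simp add: phi_eq)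
  then show "annulus_weight j \<le> \<phi> y" "\<phi> y \<le> annulus_weight (Suc j)" unfolding annulus_weight_def
    using weight_mono n by (auto intro: order.trans less_imp_le)
qed

lemma prod_annulus_weight_le_prod_phi:
  fixes x :: "nat \<Rightarrow> real^2"
  assumes fin: "\<And>j. finite {n. x n \<in> annulus \<omega> h j}"
    and cov: "\<And>n. n < K \<Longrightarrow> \<omega> < norm (x n) \<Longrightarrow> annulus_index \<omega> h (x n) < J"
  shows "(\<Prod>j<J. annulus_weight j ^ card {n. x n \<in> annulus \<omega> h j}) \<le> (\<Prod>n<K. \<phi> (x n))"
proof -
  define S where "S = {n\<in>{..<K}. \<omega> < norm (x n)}"
  have finS: "finite S" by (simp add: S_def)
  have "(\<Prod>n<K. \<phi> (x n)) = (\<Prod>n\<in>S. \<phi> (x n))"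
    by (rule prod.mono_neutral_right) (auto simp: S_def phi_eq)
  moreover have "(\<Prod>n\<in>S. annulus_weight (annulus_index \<omega> h (x n))) \<le> (\<Prod>n\<in>S. \<phi> (x n))"
  proof (rule prod_mono)
    fix n assume "n \<in> S"
    then have "x n \<in> annulus \<omega> h (annulus_index \<omega> h (x n))" using annulus_index_mem[OF omega_pos h_pos] by (auto simp: S_def)
    then show "0 \<le> annulus_weight (annulus_index \<omega> h (x n)) \<and> annulus_weight (annulus_index \<omega> h (x n)) \<le> \<phi> (x n)"
      using annulus_weight_phi_bounds annulus_weight_bounds by auto
  qed
  moreover have "(\<Prod>n\<in>S. annulus_weight (annulus_index \<omega> h (x n))) = (\<Prod>j<J. \<Prod>n\<in>{n\<in>S. annulus_index \<omega> h (x n) = j}. annulus_weight (annulus_index \<omega> h (x n)))"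
    by (rule prod.group[symmetric]) (use finS cov in \<open>auto simp: S_def\<close>)
  moreover have "\<dots> = (\<Prod>j<J. annulus_weight j ^ card {n\<in>S. annulus_index \<omega> h (x n) = j})"
    by (intro prod.cong refl) simp
  moreover have "(\<Prod>j<J. annulus_weight j ^ card {n. x n \<in> annulus \<omega> h j}) \<le> (\<Prod>j<J. annulus_weight j ^ card {n\<in>S. annulus_index \<omega> h (x n) = j})"
  proof (rule prod_mono)
    fix j
    have "{n\<in>S. annulus_index \<omega> h (x n) = j} \<subseteq> {n. x n \<in> annulus \<omega> h j}"
      using annulus_index_mem[OF omega_pos h_pos] by (auto simp: S_def)
    then have "card {n\<in>S. annulus_index \<omega> h (x n) = j} \<le> card {n. x n \<in> annulus \<omega> h j}"
      by (rule card_mono[OF fin])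
    then show "0 \<le> annulus_weight j ^ card {n. x n \<in> annulus \<omega> h j} \<and> annulus_weight j ^ card {n. x n \<in> annulus \<omega> h j} \<le> annulus_weight j ^ card {n\<in>S. annulus_index \<omega> h (x n) = j}"
      using annulus_weight_bounds by (auto intro: power_decreasing)
  qed
  ultimately show ?thesis by linarith
qed

lemma prod_phi_le_prod_annulus_weight:
  fixes x :: "nat \<Rightarrow> real^2"
  assumes fin: "\<And>j. finite {n. x n \<in> annulus \<omega> h j}"
    and cov: "\<And>n j. j < J \<Longrightarrow> x n \<in> annulus \<omega> h j \<Longrightarrow> n < K"
  shows "(\<Prod>n<K. \<phi> (x n)) \<le> (\<Prod>j<J. annulus_weight (Suc j) ^ card {n. x n \<in> annulus \<omega> h j})"
proof -
  define T where "T = (\<Union>j<J. {n. x n \<in> annulus \<omega> h j})"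
  have finT: "finite T" using fin by (simp add: T_def)
  have TK: "T \<subseteq> {..<K}" using cov by (auto simp: T_def)
  have "(\<Prod>n<K. \<phi> (x n)) = (\<Prod>n\<in>{..<K} - T. \<phi> (x n)) * (\<Prod>n\<in>T. \<phi> (x n))"
    by (rule prod.subset_diff[OF TK]) simp
  also have "\<dots> \<le> 1 * (\<Prod>n\<in>T. \<phi> (x n))"
    by (intro mult_right_mono prod_le_1 prod_nonneg) (auto simp: phi_bounds)
  also have "\<dots> \<le> (\<Prod>n\<in>T. annulus_weight (Suc (annulus_index \<omega> h (x n))))"
  proof (simp, rule prod_mono)
    fix n assume "n \<in> T"
    then obtain j where "x n \<in> annulus \<omega> h j" by (auto simp: T_def)
    then show "0 \<le> \<phi> (x n) \<and> \<phi> (x n) \<le> annulus_weight (Suc (annulus_index \<omega> h (x n)))"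
      using annulus_weight_phi_bounds phi_bounds annulus_index_eq[OF h_pos] by auto
  qed
  also have "\<dots> = (\<Prod>j<J. \<Prod>n\<in>{n\<in>T. annulus_index \<omega> h (x n) = j}. annulus_weight (Suc (annulus_index \<omega> h (x n))))"
    by (rule prod.group[symmetric]) (use finT annulus_index_eq[OF h_pos] in \<open>auto simp: T_def\<close>)
  also have "\<dots> = (\<Prod>j<J. annulus_weight (Suc j) ^ card {n. x n \<in> annulus \<omega> h j})"
  proof (intro prod.cong refl)
    fix j assume "j \<in> {..<J}"
    then have "{n\<in>T. annulus_index \<omega> h (x n) = j} = {n. x n \<in> annulus \<omega> h j}"
      using annulus_index_eq[OF h_pos] by (auto simp: T_def)
    moreover have "(\<Prod>n\<in>{n. x n \<in> annulus \<omega> h j}. annulus_weight (Suc (annulus_index \<omega> h (x n)))) = (\<Prod>n\<in>{n. x n \<in> annulus \<omega> h j}. annulus_weight (Suc j))"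
      by (intro prod.cong) (auto simp: annulus_index_eq[OF h_pos])
    ultimately show "(\<Prod>n\<in>{n\<in>T. annulus_index \<omega> h (x n) = j}. annulus_weight (Suc (annulus_index \<omega> h (x n)))) = annulus_weight (Suc j) ^ card {n. x n \<in> annulus \<omega> h j}"
      by simp
  qed
  finally show ?thesis .
qed

end

locale ppp_radial_weight = radial_weight \<omega> h \<Psi> \<phi> + prob_space M
  for \<omega> h :: real and \<Psi> :: "real \<Rightarrow> real" and \<phi> :: "real^2 \<Rightarrow> real" and M :: "'w measure" +
  fixes lam :: real and X :: "nat \<Rightarrow> 'w \<Rightarrow> real^2"
  assumes PPP: "homogeneous_PPP M lam X" and lam_nonneg: "lam \<ge> 0"
    and phi_measurable: "\<phi> \<in> borel_measurable borel"
begin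

definition "annulus_count j w = pp_count X (annulus \<omega> h j) w"

lemma points_measurable[measurable]: "X n \<in> borel_measurable M"
  using PPP unfolding homogeneous_PPP_def by blast

lemma indep_annulus_counts:
  assumes "finite I"
  shows "indep_vars (\<lambda>_. count_space UNIV) annulus_count I"
proof -
  have "disjoint_family_on (annulus \<omega> h) I"
    using disjoint_family_annulus[OF h_pos] by (auto simp: disjoint_family_on_def)
  moreover have "\<forall>i\<in>I. annulus \<omega> h i \<in> sets borel \<and> bounded (annulus \<omega> h i)"
    using annulus_measure[OF omega_pos h_pos] by auto
  ultimately show ?thesis
    using PPP assms unfolding homogeneous_PPP_def annulus_count_def[abs_def]
    by (elim conjE allE[of _ I] allE[of _ "annulus \<omega> h"]) simp
qed

lemma annulus_count_measurable[measurable]: "annulus_count j \<in> measurable M (count_space UNIV)"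
  using indep_annulus_counts[of "{j}"] by (simp add: indep_vars_def)

lemma annulus_count_poisson:
  "measure M {w\<in>space M. annulus_count j w = k} = (lam * (pi * h)) ^ k / fact k * exp (- (lam * (pi * h)))"
  using PPP annulus_measure[OF omega_pos h_pos, of j]
  unfolding homogeneous_PPP_def annulus_count_def by simp

lemma AE_finite_annulus_points: "AE w in M. \<forall>j. finite {n. X n w \<in> annulus \<omega> h j}"
  unfolding AE_all_countable
proof
  fix j
  have "\<forall>A \<in> sets borel. bounded A \<longrightarrow> (AE w in M. finite {n. X n w \<in> A})"
    using PPP unfolding homogeneous_PPP_def by simp
  then show "AE w in M. finite {n. X n w \<in> annulus \<omega> h j}"
    using annulus_measure(2,3)[OF omega_pos h_pos] by simp
qed

lemma prod_power_annulus_count_measurable: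
  fixes c :: "nat \<Rightarrow> real"
  shows "(\<lambda>w. \<Prod>j<J. c j ^ annulus_count j w) \<in> borel_measurable M"
proof -
  have "(\<lambda>w. c j ^ annulus_count j w) \<in> borel_measurable M" for j
    using measurable_compose[OF annulus_count_measurable, of "\<lambda>k. c j ^ k" borel] by (simp add: o_def)
  then show ?thesis by (intro borel_measurable_prod) auto
qed

lemma expectation_prod_power_annulus_count:
  fixes c :: "nat \<Rightarrow> real"
  assumes c: "\<And>j. 0 \<le> c j"
  shows "expectation (\<lambda>w. \<Prod>j<J. c j ^ annulus_count j w) = (\<Prod>j<J. exp (- lam * (pi * h) * (1 - c j)))"
proof -
  have "(\<integral>\<^sup>+w. ennreal (\<Prod>j<J. c j ^ annulus_count j w) \<partial>M)
      = (\<integral>\<^sup>+w. (\<Prod>j<J. ennreal (c j ^ annulus_count j w)) \<partial>M)"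
    using c by (simp add: prod_ennreal)
  also have "\<dots> = (\<Prod>j<J. \<integral>\<^sup>+w. ennreal (c j ^ annulus_count j w) \<partial>M)"
  proof (rule indep_vars_nn_integral)
    show "indep_vars (\<lambda>_. borel) (\<lambda>j w. ennreal (c j ^ annulus_count j w)) {..<J}"
      by (rule indep_vars_compose2[OF indep_annulus_counts]) auto
  qed auto
  also have "\<dots> = (\<Prod>j<J. ennreal (exp (- (lam * (pi * h)) * (1 - c j))))"
    by (intro prod.cong refl nn_integral_poisson_pgf annulus_count_measurable)
       (use annulus_count_poisson c lam_nonneg h_pos in auto)
  also have "\<dots> = ennreal (\<Prod>j<J. exp (- lam * (pi * h) * (1 - c j)))"
    by (simp add: prod_ennreal)
  finally show ?thesis
    using c by (subst integral_eq_nn_integral)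
      (auto simp: prod_power_annulus_count_measurable prod_nonneg)
qed

lemma prod_phi_monotone:
  "(\<lambda>w. \<Prod>n<K. \<phi> (X n w)) \<in> borel_measurable M"
  "0 \<le> (\<Prod>n<K. \<phi> (X n w)) \<and> (\<Prod>n<K. \<phi> (X n w)) \<le> 1"
  "(\<Prod>n<Suc K. \<phi> (X n w)) \<le> (\<Prod>n<K. \<phi> (X n w))"
proof -
  have "(\<lambda>w. \<phi> (X n w)) \<in> borel_measurable M" for n
    using measurable_compose[OF points_measurable phi_measurable] by (simp add: o_def)
  then show "(\<lambda>w. \<Prod>n<K. \<phi> (X n w)) \<in> borel_measurable M" by (intro borel_measurable_prod) auto
  show "0 \<le> (\<Prod>n<K. \<phi> (X n w)) \<and> (\<Prod>n<K. \<phi> (X n w)) \<le> 1"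
    by (simp add: phi_bounds prod_nonneg prod_le_1)
  show "(\<Prod>n<Suc K. \<phi> (X n w)) \<le> (\<Prod>n<K. \<phi> (X n w))"
    by (simp add: phi_bounds prod_nonneg mult_right_le_one_le)
qed

lemma prod_annulus_weight_monotone:
  "(\<lambda>w. \<Prod>j<J. annulus_weight j ^ annulus_count j w) \<in> borel_measurable M"
  "0 \<le> (\<Prod>j<J. annulus_weight j ^ annulus_count j w) \<and> (\<Prod>j<J. annulus_weight j ^ annulus_count j w) \<le> 1"
  "(\<Prod>j<Suc J. annulus_weight j ^ annulus_count j w) \<le> (\<Prod>j<J. annulus_weight j ^ annulus_count j w)"
  by (simp_all add: prod_power_annulus_count_measurable annulus_weight_bounds prod_nonneg prod_le_1
      power_le_one mult_right_le_one_le)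

lemmas prod_phi_limit = decseq_unit_limit[of "\<lambda>K w. \<Prod>n<K. \<phi> (X n w)", OF prod_phi_monotone]
lemmas prod_annulus_weight_limit =
  decseq_unit_limit[of "\<lambda>J w. \<Prod>j<J. annulus_weight j ^ annulus_count j w", OF prod_annulus_weight_monotone]

lemma expectation_lim_prod_phi_le:
  "expectation (\<lambda>w. lim (\<lambda>K. \<Prod>n<K. \<phi> (X n w)))
     \<le> (\<Prod>j<J. exp (- lam * (pi * h) * (1 - annulus_weight (Suc j))))"
proof -
  let ?D = "\<lambda>w. \<Prod>j<J. annulus_weight (Suc j) ^ annulus_count j w"
  have "AE w in M. lim (\<lambda>K. \<Prod>n<K. \<phi> (X n w)) \<le> ?D w"
    using AE_finite_annulus_points
  proof eventually_elim
    case (elim w)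
    have "finite (\<Union>j<J. {n. X n w \<in> annulus \<omega> h j})" using elim by auto
    from finite_nat_bounded[OF this] obtain K where "(\<Union>j<J. {n. X n w \<in> annulus \<omega> h j}) \<subseteq> {..<K}"
      by blast
    then have "\<forall>K'\<ge>K. (\<Prod>n<K'. \<phi> (X n w)) \<le> ?D w"
      unfolding annulus_count_def pp_count_def
      by (intro allI impI prod_phi_le_prod_annulus_weight) (use elim in auto)
    then show ?case by (intro LIMSEQ_le_const2[OF prod_phi_limit(1)]) auto
  qed
  moreover have "integrable M ?D"
    by (intro integrable_const_bound[where B=1])
       (auto simp: prod_power_annulus_count_measurable abs_prod annulus_weight_bounds prod_nonneg
        intro!: prod_le_1 power_le_one)
  ultimately have "expectation (\<lambda>w. lim (\<lambda>K. \<Prod>n<K. \<phi> (X n w))) \<le> expectation ?D"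
    by (intro integral_mono_AE prod_phi_limit(3))
  also have "expectation ?D = (\<Prod>j<J. exp (- lam * (pi * h) * (1 - annulus_weight (Suc j))))"
    using annulus_weight_bounds by (intro expectation_prod_power_annulus_count) auto
  finally show ?thesis .
qed

lemma expectation_lim_prod_phi_ge:
  assumes B: "\<And>J. (\<Sum>j<J. pi * h * (1 - annulus_weight j)) \<le> B"
  shows "exp (- lam * B) \<le> expectation (\<lambda>w. lim (\<lambda>K. \<Prod>n<K. \<phi> (X n w)))"
proof -
  let ?R = "\<lambda>J w. \<Prod>j<J. annulus_weight j ^ annulus_count j w"
  have "AE w in M. lim (\<lambda>J. ?R J w) \<le> lim (\<lambda>K. \<Prod>n<K. \<phi> (X n w))"
    using AE_finite_annulus_points
  proof eventually_elim
    case (elim w)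
    have "lim (\<lambda>J. ?R J w) \<le> (\<Prod>n<K. \<phi> (X n w))" for K
    proof -
      obtain J0 where "annulus_index \<omega> h ` (\<lambda>n. X n w) ` {..<K} \<subseteq> {..<J0}"
        using finite_nat_bounded[of "annulus_index \<omega> h ` (\<lambda>n. X n w) ` {..<K}"] by blast
      then have "\<forall>J\<ge>J0. ?R J w \<le> (\<Prod>n<K. \<phi> (X n w))"
        unfolding annulus_count_def pp_count_def
        by (intro allI impI prod_annulus_weight_le_prod_phi) (use elim in \<open>auto intro: less_le_trans\<close>)
      then show ?thesis by (intro LIMSEQ_le_const2[OF prod_annulus_weight_limit(1)]) auto
    qed
    then show ?case by (intro LIMSEQ_le_const[OF prod_phi_limit(1)]) auto
  qed
  then have "expectation (\<lambda>w. lim (\<lambda>J. ?R J w)) \<le> expectation (\<lambda>w. lim (\<lambda>K. \<Prod>n<K. \<phi> (X n w)))"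
    by (intro integral_mono_AE prod_phi_limit(3) prod_annulus_weight_limit(3))
  moreover have "exp (- lam * B) \<le> expectation (\<lambda>w. lim (\<lambda>J. ?R J w))"
  proof (rule LIMSEQ_le_const[OF prod_annulus_weight_limit(4)], intro exI allI impI)
    fix J
    have "expectation (?R J) = exp (- lam * (\<Sum>j<J. pi * h * (1 - annulus_weight j)))"
      using annulus_weight_bounds
      by (subst expectation_prod_power_annulus_count) (auto simp: exp_sum[symmetric] sum_distrib_left mult_ac)
    then show "exp (- lam * B) \<le> expectation (?R J)"
      using B[of J] lam_nonneg by (simp add: mult_left_mono)
  qed
  ultimately show ?thesis by linarith
qed

lemma laplace_exponent_annulus_step:
  assumes c: "c > 0" and d: "0 < \<delta>" "\<delta> < 1" and \<Psi>: "\<Psi> = mark_laplace c \<delta> N"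
  defines "G j \<equiv> laplace_exponent c \<delta> N (\<omega>^2 + real j * h)"
  shows "pi * h * (1 - annulus_weight (Suc j)) \<le> G j - G (Suc j)"
    and "G j - G (Suc j) \<le> pi * h * (1 - annulus_weight j)"
proof -
  have v: "0 < \<omega>^2 + real j * h" "\<omega>^2 + real j * h \<le> \<omega>^2 + real (Suc j) * h"
    using omega_pos h_pos by (auto intro: add_pos_nonneg)
  have w: "annulus_weight i = mark_laplace c \<delta> N (sqrt (\<omega>^2 + real i * h))" for i
    using annulus_weight_def[of i] unfolding \<Psi> .
  have "(\<omega>^2 + real (Suc j) * h) - (\<omega>^2 + real j * h) = h" by (simp add: algebra_simps)
  then show "pi * h * (1 - annulus_weight (Suc j)) \<le> G j - G (Suc j)"
    and "G j - G (Suc j) \<le> pi * h * (1 - annulus_weight j)"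
    using laplace_exponent_diff_bounds[OF c d v, of N]
    by (simp_all add: G_def w mult_ac)
qed

lemma expectation_lim_prod_phi_le_laplace:
  assumes c: "c > 0" and d: "0 < \<delta>" "\<delta> < 1" and \<Psi>: "\<Psi> = mark_laplace c \<delta> N"
  shows "expectation (\<lambda>w. lim (\<lambda>K. \<Prod>n<K. \<phi> (X n w)))
           \<le> exp (- lam * (laplace_exponent c \<delta> N (\<omega>^2) - pi * h))"
proof -
  define G where "G j = laplace_exponent c \<delta> N (\<omega>^2 + real j * h)" for j
  note step = laplace_exponent_annulus_step[OF c d \<Psi>, folded G_def]
  let ?E = "expectation (\<lambda>w. lim (\<lambda>K. \<Prod>n<K. \<phi> (X n w)))"
  have "?E \<le> exp (- lam * (G 1 - G (Suc J)))" for J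
  proof -
    have "G 1 - G (Suc J) = (\<Sum>j<J. G (Suc j) - G (Suc (Suc j)))" by (induction J) auto
    also have "\<dots> \<le> (\<Sum>j<J. pi * h * (1 - annulus_weight (Suc j)))" by (intro sum_mono step(2))
    finally have sum: "G 1 - G (Suc J) \<le> (\<Sum>j<J. pi * h * (1 - annulus_weight (Suc j)))" .
    have "?E \<le> (\<Prod>j<J. exp (- lam * (pi * h) * (1 - annulus_weight (Suc j))))"
      by (rule expectation_lim_prod_phi_le)
    also have "\<dots> = exp (- lam * (\<Sum>j<J. pi * h * (1 - annulus_weight (Suc j))))"
      by (simp add: exp_sum[symmetric] sum_distrib_left mult_ac)
    also have "\<dots> \<le> exp (- lam * (G 1 - G (Suc J)))"
      using sum lam_nonneg by (simp add: mult_left_mono)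
    finally show ?thesis .
  qed
  moreover have "(\<lambda>J. G (Suc J)) \<longlonglongrightarrow> 0"
  proof -
    have "filterlim (\<lambda>J. h * real (Suc J)) at_top sequentially"
      by (intro filterlim_tendsto_pos_mult_at_top[OF tendsto_const h_pos]
          filterlim_compose[OF filterlim_real_sequentially filterlim_Suc])
    then have "filterlim (\<lambda>J. \<omega>^2 + real (Suc J) * h) at_top sequentially"
      by (intro filterlim_tendsto_add_at_top[OF tendsto_const]) (simp add: mult.commute)
    then show ?thesis
      unfolding G_def by (rule filterlim_compose[OF laplace_exponent_tendsto_0_at_top[OF c d]])
  qed
  then have "(\<lambda>J. exp (- lam * (G 1 - G (Suc J)))) \<longlonglongrightarrow> exp (- lam * G 1)"
    by (auto intro!: tendsto_eq_intros)
  ultimately have "?E \<le> exp (- lam * G 1)" by (intro LIMSEQ_le_const) auto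
  also have "\<dots> \<le> exp (- lam * (G 0 - pi * h))"
  proof -
    have "0 \<le> pi * h * annulus_weight 0" using annulus_weight_bounds(1)[of 0] h_pos by simp
    then have "G 0 - pi * h \<le> G 1" using step(2)[of 0] by (simp add: algebra_simps)
    then show ?thesis using lam_nonneg by (simp add: mult_left_mono)
  qed
  finally show ?thesis by (simp add: G_def)
qed

lemma expectation_lim_prod_phi_ge_laplace:
  assumes c: "c > 0" and d: "0 < \<delta>" "\<delta> < 1" and \<Psi>: "\<Psi> = mark_laplace c \<delta> N"
  shows "exp (- lam * (laplace_exponent c \<delta> N (\<omega>^2) + pi * h))
           \<le> expectation (\<lambda>w. lim (\<lambda>K. \<Prod>n<K. \<phi> (X n w)))"
proof (rule expectation_lim_prod_phi_ge)
  define G where "G j = laplace_exponent c \<delta> N (\<omega>^2 + real j * h)" for j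
  note step = laplace_exponent_annulus_step[OF c d \<Psi>, folded G_def]
  fix J
  have "(\<Sum>j<J. pi * h * (1 - annulus_weight j)) \<le> (\<Sum>j<Suc J. pi * h * (1 - annulus_weight j))"
    using annulus_weight_bounds(2)[of J] h_pos by simp
  also have "\<dots> = pi * h * (1 - annulus_weight 0) + (\<Sum>j<J. pi * h * (1 - annulus_weight (Suc j)))"
    by (rule sum.lessThan_Suc_shift)
  also have "\<dots> \<le> pi * h + (\<Sum>j<J. G j - G (Suc j))"
    using annulus_weight_bounds(1)[of 0] h_pos by (intro add_mono sum_mono step(1)) simp
  also have "(\<Sum>j<J. G j - G (Suc j)) = G 0 - G J" by (induction J) auto
  also have "pi * h + (G 0 - G J) \<le> laplace_exponent c \<delta> N (\<omega>^2) + pi * h"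
    using laplace_exponent_bounds(1)[OF c d, of "\<omega>^2 + real J * h" N] omega_pos h_pos
    by (simp add: G_def add_pos_nonneg)
  finally show "(\<Sum>j<J. pi * h * (1 - annulus_weight j)) \<le> laplace_exponent c \<delta> N (\<omega>^2) + pi * h" .
qed

end

lemma (in prob_space) tendsto_expectation_prod_mark_laplace:
  fixes X :: "nat \<Rightarrow> 'a \<Rightarrow> real^2" and \<phi> :: "real^2 \<Rightarrow> real"
  assumes PPP: "homogeneous_PPP M lam X" and lam: "lam \<ge> 0"
    and \<omega>: "\<omega> > 0" and c: "c > 0" and d: "0 < \<delta>" "\<delta> < 1"
    and \<phi>: "\<And>y. \<phi> y = (if \<omega> < norm y then mark_laplace c \<delta> N (norm y) else 1)"
    and \<phi>m: "\<phi> \<in> borel_measurable borel"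
  shows "(\<lambda>K. expectation (\<lambda>w. \<Prod>n<K. \<phi> (X n w))) \<longlonglongrightarrow> exp (- lam * laplace_exponent c \<delta> N (\<omega>^2))"
proof -
  let ?E = "expectation (\<lambda>w. lim (\<lambda>K. \<Prod>n<K. \<phi> (X n w)))"
  let ?G = "laplace_exponent c \<delta> N (\<omega>^2)"
  have loc: "ppp_radial_weight \<omega> h (mark_laplace c \<delta> N) \<phi> M lam X" if "h > 0" for h
  proof unfold_locales
    show "mark_laplace c \<delta> N r \<le> mark_laplace c \<delta> N r'" if "\<omega> \<le> r" "r \<le> r'" for r r'
      using that \<omega> by (intro mark_laplace_mono[OF c d(1)]) auto
  qed (use that \<omega> PPP lam \<phi> \<phi>m mark_laplace_bounds[OF c] in auto)
  have "\<forall>\<^sub>F h in at_right 0. exp (- lam * (?G + pi * h)) \<le> ?E"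
    using eventually_at_right_less[of 0] apply eventually_elim
    by (rule ppp_radial_weight.expectation_lim_prod_phi_ge_laplace[OF loc c d refl])
  moreover have "((\<lambda>h. exp (- lam * (?G + pi * h))) \<longlongrightarrow> exp (- lam * ?G)) (at_right 0)"
    by (auto intro!: tendsto_eq_intros)
  ultimately have ge: "exp (- lam * ?G) \<le> ?E"
    by (intro tendsto_le[OF trivial_limit_at_right_real tendsto_const])
  have "\<forall>\<^sub>F h in at_right 0. ?E \<le> exp (- lam * (?G - pi * h))"
    using eventually_at_right_less[of 0] apply eventually_elim
    by (rule ppp_radial_weight.expectation_lim_prod_phi_le_laplace[OF loc c d refl])
  moreover have "((\<lambda>h. exp (- lam * (?G - pi * h))) \<longlongrightarrow> exp (- lam * ?G)) (at_right 0)"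
    by (auto intro!: tendsto_eq_intros)
  ultimately have "?E \<le> exp (- lam * ?G)"
    by (intro tendsto_le[OF trivial_limit_at_right_real _ tendsto_const])
  with ge have "?E = exp (- lam * ?G)" by (rule antisym[rotated])
  then show ?thesis
    using ppp_radial_weight.prod_phi_limit(4)[OF loc[OF zero_less_one]] by simp
qed

section \<open>Shot noise with Erlang marks\<close>

locale erlang_marked_ppp = prob_space M for M :: "'w measure" +
  fixes lam :: real and X :: "nat \<Rightarrow> 'w \<Rightarrow> real^2" and g :: "nat \<Rightarrow> 'w \<Rightarrow> real" and k :: nat
  assumes PPP: "homogeneous_PPP M lam X" and lam_nonneg: "lam \<ge> 0"
    and marks_measurable: "\<forall>n. g n \<in> borel_measurable M"
    and marks_erlang: "\<forall>n. distributed M lborel (g n) (erlang_density k 1)"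
    and marks_indep: "indep_vars (\<lambda>_. borel) g UNIV"
    and marks_indep_points: "distr M (Pi\<^sub>M UNIV (\<lambda>_. borel) \<Otimes>\<^sub>M Pi\<^sub>M UNIV (\<lambda>_. borel))
                        (\<lambda>w. ((\<lambda>n. X n w), (\<lambda>n. g n w)))
                    = distr M (Pi\<^sub>M UNIV (\<lambda>_. borel)) (\<lambda>w n. X n w)
                      \<Otimes>\<^sub>M distr M (Pi\<^sub>M UNIV (\<lambda>_. borel)) (\<lambda>w n. g n w)"
begin

definition shot :: "real \<Rightarrow> real \<Rightarrow> real \<Rightarrow> nat \<Rightarrow> 'w \<Rightarrow> real" where
  "shot \<omega> a \<alpha> n w = (if \<omega> < norm (X n w) then a * g n w * norm (X n w) powr (- \<alpha>) else 0)"

lemma points_measurable[measurable]: "X n \<in> borel_measurable M"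
  using PPP unfolding homogeneous_PPP_def by blast

lemma mark_measurable[measurable]: "g n \<in> borel_measurable M"
  using marks_measurable by blast

lemma shot_measurable[measurable]: "shot \<omega> a \<alpha> n \<in> borel_measurable M"
  unfolding shot_def by measurable

lemma AE_shot_nonneg:
  assumes "a \<ge> 0"
  shows "AE w in M. \<forall>n. 0 \<le> shot \<omega> a \<alpha> n w"
proof -
  have "AE w in M. 0 \<le> g n w" for n
    by (subst distributed_AE2[OF marks_erlang[rule_format]]) (auto simp: erlang_density_def)
  then have "AE w in M. \<forall>n. 0 \<le> g n w" unfolding AE_all_countable ..
  then show ?thesis
    by eventually_elim (use assms in \<open>auto simp: shot_def\<close>)
qed

lemma tendsto_laplace_partial_shot_noise:
  assumes \<omega>: "\<omega> > 0" and a: "a > 0" and \<alpha>: "\<alpha> > 2" and s: "s > 0"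
  shows "(\<lambda>K. expectation (\<lambda>w. exp (- s * (\<Sum>n<K. shot \<omega> a \<alpha> n w))))
           \<longlonglongrightarrow> exp (- lam * laplace_exponent (s * a) (2/\<alpha>) (Suc k) (\<omega>^2))"
proof -
  define \<beta> where "\<beta> y = (if \<omega> < norm y then s * a * norm y powr (- \<alpha>) else 0)" for y :: "real^2"
  have \<beta>m[measurable]: "\<beta> \<in> borel_measurable borel" unfolding \<beta>_def by measurable
  have \<beta>0: "0 \<le> \<beta> y" for y using s a by (simp add: \<beta>_def)
  have exp_eq: "exp (- s * (\<Sum>n<K. shot \<omega> a \<alpha> n w)) = (\<Prod>n<K. exp (- \<beta> (X n w) * g n w))" for K w
  proof -
    have "- s * shot \<omega> a \<alpha> n w = - \<beta> (X n w) * g n w" for n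
      by (simp add: shot_def \<beta>_def)
    then show ?thesis by (simp add: exp_sum[symmetric] sum_distrib_left)
  qed
  have "expectation (\<lambda>w. exp (- s * (\<Sum>n<K. shot \<omega> a \<alpha> n w)))
      = expectation (\<lambda>w. \<Prod>n<K. 1 / (1 + \<beta> (X n w)) ^ Suc k)" for K
  proof -
    have "(\<integral>\<^sup>+w. ennreal (\<Prod>n<K. exp (- \<beta> (X n w) * g n w)) \<partial>M)
        = (\<integral>\<^sup>+w. ennreal (\<Prod>n<K. 1 / (1 + \<beta> (X n w)) ^ Suc k) \<partial>M)"
      by (rule nn_integral_prod_exp_erlang_marks[OF _ marks_measurable marks_erlang marks_indep
            marks_indep_points \<beta>m]) (use \<beta>0 in auto)
    then show ?thesis
      unfolding exp_eq using \<beta>0 by (subst (1 2) integral_eq_nn_integral) (auto intro!: prod_nonneg)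
  qed
  moreover have "(\<lambda>K. expectation (\<lambda>w. \<Prod>n<K. 1 / (1 + \<beta> (X n w)) ^ Suc k))
      \<longlonglongrightarrow> exp (- lam * laplace_exponent (s * a) (2/\<alpha>) (Suc k) (\<omega>^2))"
  proof (rule tendsto_expectation_prod_mark_laplace[OF PPP lam_nonneg \<omega>])
    show "1 / (1 + \<beta> y) ^ Suc k
        = (if \<omega> < norm y then mark_laplace (s * a) (2/\<alpha>) (Suc k) (norm y) else 1)" for y
      using \<alpha> by (simp add: \<beta>_def mark_laplace_def)
  qed (use s a \<alpha> in auto)
  ultimately show ?thesis by simp
qed

lemma AE_summable_shot:
  assumes \<omega>: "\<omega> > 0" and a: "a > 0" and \<alpha>: "\<alpha> > 2"
  shows "AE w in M. summable (\<lambda>n. shot \<omega> a \<alpha> n w)"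
proof -
  let ?t = "\<lambda>n w. max 0 (shot \<omega> a \<alpha> n w)"
  let ?L = "\<lambda>s. exp (- lam * laplace_exponent (s * a) (2/\<alpha>) (Suc k) (\<omega>^2))"
  have "AE w in M. summable (\<lambda>n. ?t n w)"
  proof (rule AE_summable_if_laplace_tendsto_1)
    fix s :: real assume s: "0 < s"
    have "expectation (\<lambda>w. exp (- s * (\<Sum>n<K. ?t n w)))
        = expectation (\<lambda>w. exp (- s * (\<Sum>n<K. shot \<omega> a \<alpha> n w)))" for K
    proof (rule integral_cong_AE)
      show "AE w in M. exp (- s * (\<Sum>n<K. ?t n w)) = exp (- s * (\<Sum>n<K. shot \<omega> a \<alpha> n w))"
        using AE_shot_nonneg[of a \<omega> \<alpha>, OF less_imp_le[OF a]] by eventually_elim simp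
    qed measurable
    then show "(\<lambda>K. expectation (\<lambda>w. exp (- s * (\<Sum>n<K. ?t n w)))) \<longlonglongrightarrow> ?L s"
      using tendsto_laplace_partial_shot_noise[OF \<omega> a \<alpha> s] by simp
  next
    have "filterlim (\<lambda>s. s * a) (at_right 0) (at_right 0)"
      unfolding filterlim_at using a eventually_at_right_less[of 0]
      by (auto elim!: eventually_mono intro!: tendsto_eq_intros)
    then have "((\<lambda>s. laplace_exponent (s * a) (2/\<alpha>) (Suc k) (\<omega>^2)) \<longlongrightarrow> 0) (at_right 0)"
      using laplace_exponent_tendsto_0_at_right[of "2/\<alpha>" "\<omega>^2" "Suc k"] \<alpha> \<omega>
      by (auto intro: filterlim_compose)
    then show "(?L \<longlongrightarrow> 1) (at_right 0)" by (auto intro!: tendsto_eq_intros)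
  qed auto
  then show ?thesis
    using AE_shot_nonneg[of a \<omega> \<alpha>, OF less_imp_le[OF a]] by eventually_elim (simp add: max_def)
qed

lemma laplace_shot_noise:
  assumes \<omega>: "\<omega> > 0" and a: "a > 0" and \<alpha>: "\<alpha> > 2" and s: "s > 0"
  shows "expectation (\<lambda>w. exp (- s * (\<Sum>n. shot \<omega> a \<alpha> n w)))
           = exp (- lam * laplace_exponent (s * a) (2/\<alpha>) (Suc k) (\<omega>^2))"
proof (rule LIMSEQ_unique[OF _ tendsto_laplace_partial_shot_noise[OF assms]])
  show "(\<lambda>K. expectation (\<lambda>w. exp (- s * (\<Sum>n<K. shot \<omega> a \<alpha> n w))))
          \<longlonglongrightarrow> expectation (\<lambda>w. exp (- s * (\<Sum>n. shot \<omega> a \<alpha> n w)))"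
  proof (rule integral_dominated_convergence[where w="\<lambda>_. 1"])
    show "AE w in M. (\<lambda>K. exp (- s * (\<Sum>n<K. shot \<omega> a \<alpha> n w))) \<longlonglongrightarrow> exp (- s * (\<Sum>n. shot \<omega> a \<alpha> n w))"
      using AE_summable_shot[OF \<omega> a \<alpha>] by eventually_elim (intro tendsto_intros summable_LIMSEQ)
    show "AE w in M. norm (exp (- s * (\<Sum>n<K. shot \<omega> a \<alpha> n w))) \<le> 1" for K
      using AE_shot_nonneg[of a \<omega> \<alpha>, OF less_imp_le[OF a]] by eventually_elim (use s in \<open>auto intro!: sum_nonneg mult_nonneg_nonneg\<close>)
  qed auto
qed

end

theorem lemma3:
  fixes M :: "'w measure"
    and X :: "nat \<Rightarrow> 'w \<Rightarrow> real^2"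
    and g :: "nat \<Rightarrow> 'w \<Rightarrow> real"
    and k N Mant :: nat
    and x0 s lam1 P1 Pk Bk eta ank alpha1 alphak :: real
  assumes "prob_space M"
    and "k \<ge> 2" and "x0 > 0" and "s > 0"
    and "N \<ge> 2" and "Mant > N"
    and "lam1 > 0" and "P1 > 0" and "Pk > 0" and "Bk > 0" and "eta > 0" and "ank > 0"
    and "alpha1 > 2" and "alphak > 2"
    and PPP: "homogeneous_PPP M lam1 X"
    and g_meas: "\<forall>n. g n \<in> borel_measurable M"
    and g_gamma: "\<forall>n. distributed M lborel (g n) (erlang_density (N - 1) 1)"
    and g_iid: "prob_space.indep_vars M (\<lambda>_. borel) g UNIV"
    and g_indep_X: "distr M (Pi\<^sub>M UNIV (\<lambda>_. borel) \<Otimes>\<^sub>M Pi\<^sub>M UNIV (\<lambda>_. borel))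
                        (\<lambda>w. ((\<lambda>n. X n w), (\<lambda>n. g n w)))
                    = distr M (Pi\<^sub>M UNIV (\<lambda>_. borel)) (\<lambda>w n. X n w)
                      \<Otimes>\<^sub>M distr M (Pi\<^sub>M UNIV (\<lambda>_. borel)) (\<lambda>w n. g n w)"
  shows
    "let delta1 = 2 / alpha1;
         GM = real Mant - real N + 1;
         P1k = P1 / Pk;
         omega = (P1k * GM / (ank * Bk * real N)) powr (delta1 / 2) * x0 powr (alphak / alpha1);
         I = (\<lambda>w. \<Sum>n. (if norm (X n w) > omega
                         then P1 / real N * g n w * eta * norm (X n w) powr (- alpha1) else 0));
         c = s * P1 / real N * eta
     in complex_of_real (prob_space.expectation M (\<lambda>w. exp (- s * I w)))
        = exp (- complex_of_real (lam1 * pi * delta1) *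
            (\<Sum>p=1..N. of_nat (N choose p) * complex_of_real (c ^ p)
               * (complex_of_real (- c)) powr (complex_of_real (delta1 - real p))
               * inc_beta (complex_of_real (- c * omega powr (- alpha1)))
                          (complex_of_real (real p - delta1)) (complex_of_real (1 - real N))))"
proof -
  interpret erlang_marked_ppp M lam1 X g "N - 1"
    using assms(7)
    by (intro erlang_marked_ppp.intro erlang_marked_ppp_axioms.intro assms(1) PPP g_meas g_gamma g_iid
        g_indep_X) simp
  define omega where "omega = (P1 / Pk * (real Mant - real N + 1) / (ank * Bk * real N)) powr (2 / alpha1 / 2)
    * x0 powr (alphak / alpha1)"
  define a where "a = P1 / real N * eta"
  define c where "c = s * P1 / real N * eta"
  have N: "Suc (N - 1) = N" "real N > 0" using assms(5) by auto
  have omega: "omega > 0" unfolding omega_def using assms N by simp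
  have a: "a > 0" and c: "c = s * a" "c > 0" using assms N by (simp_all add: a_def c_def)
  have shot: "(if norm (X n w) > omega then P1 / real N * g n w * eta * norm (X n w) powr (- alpha1) else 0)
      = shot omega a alpha1 n w" for n w
    by (simp add: shot_def a_def mult_ac)
  have "expectation (\<lambda>w. exp (- s * (\<Sum>n. shot omega a alpha1 n w)))
      = exp (- lam1 * laplace_exponent c (2 / alpha1) N (omega^2))"
    using laplace_shot_noise[OF omega a assms(13,4)] N c by simp
  moreover have "complex_of_real (laplace_exponent c (2 / alpha1) N (omega^2))
      = complex_of_real (pi * (2 / alpha1)) *
         (\<Sum>p=1..N. of_nat (N choose p) * complex_of_real (c ^ p)
            * complex_of_real (- c) powr complex_of_real (2 / alpha1 - real p)
            * inc_beta (complex_of_real (- c * omega powr (- alpha1)))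
                (complex_of_real (real p - 2 / alpha1)) (complex_of_real (1 - real N)))"
    by (rule laplace_exponent_eq_inc_beta_sum[OF c(2) omega assms(13)])
  ultimately show ?thesis
    unfolding Let_def omega_def[symmetric] c_def[symmetric] shot
    by (simp add: exp_of_real[symmetric] mult.assoc)
qed

end
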